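(* Let $\Lambda'$, $\Lambda\subset\Lambda'$ and $Z$ be as in the context. Let $V$ and $W$ be $\Lambda'$-modules on which $Z$ acts by characters $\omega_V,\omega_W:Z\to\mathbb F^\times$, and suppose $\omega_V=\omega_W$. Then for every $i\ge0$ restriction induces an isomorphism $$\textnormal{Ext}^i_{\Lambda'}(V,W)\xrightarrow{\sim}\textnormal{Ext}^i_\Lambda(V|_\Lambda,W|_\Lambda).$$
   Context: Let $\mathbb{F}$ be a field of characteristic $p$, sufficiently large so that all simple modules considered are absolutely simple. $\Lambda'$ is an Artinian $\mathbb F$-algebra, $\Lambda\subset\Lambda'$ a subalgebra, and $Z$ a finite subgroup of the group of units of the center of $\Lambda'$, of order prime to $p$. Put $Y:=Z/(\Lambda\cap Z)$. It is assumed that $\Lambda'$ is a crossed product $\Lambda*Y$: there is a set $\widetilde Y=\{\widetilde y:y\in Y\}$ of units of $\Lambda'$ (the image of a set-theoretic section $Y\to Z$ sending $1$ to $1$) with $|\widetilde Y|=|Y|$, such that $\Lambda'$ is free as a left and as a right $\Lambda$-module with basis $\widetilde Y$, $\widetilde{1_Y}=1$, and for $y_1,y_2\in Y$, $\widetilde{y_1}\Lambda=\Lambda\widetilde{y_1}$ and $\widetilde{y_1}\widetilde{y_2}\Lambda=\widetilde{y_1y_2}\Lambda$. Modules are left modules; "$Z$ acts by a character $\omega$" means $z\cdot v=\omega(z)v$ for all $z\in Z$, $v$ in the module. *)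

theory Defs
  imports Main "HOL-Computational_Algebra.Primes"
begin

text \<open>The algebra \<Lambda>' is the whole ring type 'r; the field F is the type 'f, acting
  through a central ring homomorphism iota.\<close>

definition falgebra :: "('f::field \<Rightarrow> 'r::ring_1) \<Rightarrow> bool" where
  "falgebra iota \<longleftrightarrow> iota 1 = 1 \<and> (\<forall>a b. iota (a + b) = iota a + iota b)
     \<and> (\<forall>a b. iota (a * b) = iota a * iota b) \<and> (\<forall>c x. iota c * x = x * iota c)"

definition left_ideal :: "'r::ring_1 set \<Rightarrow> bool" where
  "left_ideal I \<longleftrightarrow> 0 \<in> I \<and> (\<forall>x\<in>I. \<forall>y\<in>I. x + y \<in> I) \<and> (\<forall>r. \<forall>x\<in>I. r * x \<in> I)"

definition artinian :: "'r::ring_1 itself \<Rightarrow> bool" where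
  "artinian _ \<longleftrightarrow> (\<forall>I :: nat \<Rightarrow> 'r set. (\<forall>n. left_ideal (I n) \<and> I (Suc n) \<subseteq> I n)
        \<longrightarrow> (\<exists>N. \<forall>n\<ge>N. I n = I N))"

definition subalgebra :: "('f::field \<Rightarrow> 'r::ring_1) \<Rightarrow> 'r set \<Rightarrow> bool" where
  "subalgebra iota A \<longleftrightarrow> range iota \<subseteq> A \<and> (\<forall>x\<in>A. \<forall>y\<in>A. x + y \<in> A \<and> x * y \<in> A)
     \<and> (\<forall>x\<in>A. - x \<in> A)"

definition lmodule :: "('r::ring_1 \<Rightarrow> 'v::ab_group_add \<Rightarrow> 'v) \<Rightarrow> bool" where
  "lmodule act \<longleftrightarrow> (\<forall>a b v. act (a + b) v = act a v + act b v)
     \<and> (\<forall>a v w. act a (v + w) = act a v + act a w)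
     \<and> (\<forall>a b v. act (a * b) v = act a (act b v)) \<and> (\<forall>v. act 1 v = v)"

definition central_unit_group :: "'r::ring_1 set \<Rightarrow> bool" where
  "central_unit_group Z \<longleftrightarrow> finite Z \<and> 1 \<in> Z \<and> (\<forall>x\<in>Z. \<forall>y\<in>Z. x * y \<in> Z)
     \<and> (\<forall>z\<in>Z. \<exists>z'\<in>Z. z * z' = 1 \<and> z' * z = 1) \<and> (\<forall>z\<in>Z. \<forall>x. z * x = x * z)"

definition zcoset :: "'r::ring_1 set \<Rightarrow> 'r \<Rightarrow> 'r set" where
  "zcoset H z = (\<lambda>h. z * h) ` H"

definition quotY :: "'r::ring_1 set \<Rightarrow> 'r set \<Rightarrow> 'r set set" where
  "quotY Lam Z = zcoset (Lam \<inter> Z) ` Z"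

text \<open>Product of cosets in Y (well defined since Z is central).\<close>
definition ymult :: "'r::ring_1 set \<Rightarrow> 'r set \<Rightarrow> 'r set \<Rightarrow> 'r set \<Rightarrow> 'r set" where
  "ymult Lam Z y1 y2 = zcoset (Lam \<inter> Z) ((SOME z1. z1 \<in> y1) * (SOME z2. z2 \<in> y2))"

text \<open>The algebra (all of 'r) is the crossed product \<Lambda> * Y with respect to the
  section sec : Y \<rightarrow> Z (whose image is the set \<open>Y~\<close>).\<close>
definition crossed_product :: "'r::ring_1 set \<Rightarrow> 'r set \<Rightarrow> ('r set \<Rightarrow> 'r) \<Rightarrow> bool" where
  "crossed_product Lam Z sec \<longleftrightarrow>
     (let Y = quotY Lam Z in
       (\<forall>y\<in>Y. sec y \<in> y)
     \<and> sec (zcoset (Lam \<inter> Z) 1) = 1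
     \<and> inj_on sec Y
     \<and> (\<forall>x. \<exists>!a. (\<forall>y\<in>Y. a y \<in> Lam) \<and> (\<forall>y. y \<notin> Y \<longrightarrow> a y = 0)
                 \<and> x = (\<Sum>y\<in>Y. a y * sec y))
     \<and> (\<forall>x. \<exists>!a. (\<forall>y\<in>Y. a y \<in> Lam) \<and> (\<forall>y. y \<notin> Y \<longrightarrow> a y = 0)
                 \<and> x = (\<Sum>y\<in>Y. sec y * a y))
     \<and> (\<forall>y\<in>Y. (\<lambda>l. sec y * l) ` Lam = (\<lambda>l. l * sec y) ` Lam)
     \<and> (\<forall>y1\<in>Y. \<forall>y2\<in>Y. (\<lambda>l. sec y1 * sec y2 * l) ` Lam
                          = (\<lambda>l. sec (ymult Lam Z y1 y2) * l) ` Lam))"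

definition acts_by_character ::
  "('f::field \<Rightarrow> 'r::ring_1) \<Rightarrow> 'r set \<Rightarrow> ('r \<Rightarrow> 'v::ab_group_add \<Rightarrow> 'v) \<Rightarrow> ('r \<Rightarrow> 'f) \<Rightarrow> bool" where
  "acts_by_character iota Z act om \<longleftrightarrow>
     (\<forall>z\<in>Z. om z \<noteq> 0) \<and> (\<forall>z1\<in>Z. \<forall>z2\<in>Z. om (z1 * z2) = om z1 * om z2)
     \<and> (\<forall>z\<in>Z. \<forall>v. act z v = act (iota (om z)) v)"

text \<open>For an F-subalgebra A and A-modules V, W, Ext^n_A(V,W) is the n-th cohomology of the
  complex C^n = Hom_F(A^{\<otimes>n} \<otimes>_F V, W) (cochains = F-multilinear maps A^n \<times> V \<rightarrow> W),
  obtained by applying Hom_A(-,W) to the bar resolution A \<otimes>_F A^{\<otimes>n} \<otimes>_F V of V.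
  Cochains are represented by functions on lists of length n, zero off A^n.\<close>

definition sgnw :: "nat \<Rightarrow> 'w::ab_group_add \<Rightarrow> 'w" where
  "sgnw k w = (if even k then w else - w)"

definition merge :: "nat \<Rightarrow> 'r::ring_1 list \<Rightarrow> 'r list" where
  "merge j xs = take j xs @ [xs ! j * xs ! Suc j] @ drop (Suc (Suc j)) xs"

definition adm :: "'r set \<Rightarrow> nat \<Rightarrow> 'r list \<Rightarrow> bool" where
  "adm A n xs \<longleftrightarrow> length xs = n \<and> set xs \<subseteq> A"

definition bar_d :: "('r::ring_1 \<Rightarrow> 'v \<Rightarrow> 'v) \<Rightarrow> ('r \<Rightarrow> 'w::ab_group_add \<Rightarrow> 'w) \<Rightarrow> nat
    \<Rightarrow> ('r list \<Rightarrow> 'v \<Rightarrow> 'w) \<Rightarrow> 'r list \<Rightarrow> 'v \<Rightarrow> 'w" where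
  "bar_d actV actW n f xs v =
     actW (hd xs) (f (tl xs) v)
     + (\<Sum>j<n. sgnw (Suc j) (f (merge j xs) v))
     + sgnw (Suc n) (f (butlast xs) (actV (last xs) v))"

definition cochain :: "('f::field \<Rightarrow> 'r::ring_1) \<Rightarrow> 'r set \<Rightarrow> ('r \<Rightarrow> 'v::ab_group_add \<Rightarrow> 'v)
    \<Rightarrow> ('r \<Rightarrow> 'w::ab_group_add \<Rightarrow> 'w) \<Rightarrow> nat \<Rightarrow> ('r list \<Rightarrow> 'v \<Rightarrow> 'w) \<Rightarrow> bool" where
  "cochain iota A actV actW n f \<longleftrightarrow>
     (\<forall>xs v. \<not> adm A n xs \<longrightarrow> f xs v = 0)
   \<and> (\<forall>xs. adm A n xs \<longrightarrow>
        (\<forall>v v'. f xs (v + v') = f xs v + f xs v')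
      \<and> (\<forall>c v. f xs (actV (iota c) v) = actW (iota c) (f xs v))
      \<and> (\<forall>i<n. \<forall>y\<in>A. \<forall>v. f (xs[i := xs ! i + y]) v = f xs v + f (xs[i := y]) v)
      \<and> (\<forall>i<n. \<forall>c v. f (xs[i := iota c * xs ! i]) v = actW (iota c) (f xs v)))"

definition cocycle :: "('f::field \<Rightarrow> 'r::ring_1) \<Rightarrow> 'r set \<Rightarrow> ('r \<Rightarrow> 'v::ab_group_add \<Rightarrow> 'v)
    \<Rightarrow> ('r \<Rightarrow> 'w::ab_group_add \<Rightarrow> 'w) \<Rightarrow> nat \<Rightarrow> ('r list \<Rightarrow> 'v \<Rightarrow> 'w) \<Rightarrow> bool" where
  "cocycle iota A actV actW n f \<longleftrightarrow> cochain iota A actV actW n f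
     \<and> (\<forall>xs v. adm A (Suc n) xs \<longrightarrow> bar_d actV actW n f xs v = 0)"

definition coboundary :: "('f::field \<Rightarrow> 'r::ring_1) \<Rightarrow> 'r set \<Rightarrow> ('r \<Rightarrow> 'v::ab_group_add \<Rightarrow> 'v)
    \<Rightarrow> ('r \<Rightarrow> 'w::ab_group_add \<Rightarrow> 'w) \<Rightarrow> nat \<Rightarrow> ('r list \<Rightarrow> 'v \<Rightarrow> 'w) \<Rightarrow> bool" where
  "coboundary iota A actV actW n f \<longleftrightarrow> cochain iota A actV actW n f
     \<and> (case n of 0 \<Rightarrow> (\<forall>xs v. f xs v = 0)
        | Suc m \<Rightarrow> (\<exists>g. cochain iota A actV actW m g
                        \<and> (\<forall>xs v. adm A n xs \<longrightarrow> f xs v = bar_d actV actW m g xs v)))"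

definition ext_rel :: "('f::field \<Rightarrow> 'r::ring_1) \<Rightarrow> 'r set \<Rightarrow> ('r \<Rightarrow> 'v::ab_group_add \<Rightarrow> 'v)
    \<Rightarrow> ('r \<Rightarrow> 'w::ab_group_add \<Rightarrow> 'w) \<Rightarrow> nat \<Rightarrow> (('r list \<Rightarrow> 'v \<Rightarrow> 'w) \<times> ('r list \<Rightarrow> 'v \<Rightarrow> 'w)) set" where
  "ext_rel iota A actV actW n = {(f, g). cocycle iota A actV actW n f \<and> cocycle iota A actV actW n g
      \<and> coboundary iota A actV actW n (\<lambda>xs v. f xs v - g xs v)}"

definition Ext :: "('f::field \<Rightarrow> 'r::ring_1) \<Rightarrow> 'r set \<Rightarrow> ('r \<Rightarrow> 'v::ab_group_add \<Rightarrow> 'v)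
    \<Rightarrow> ('r \<Rightarrow> 'w::ab_group_add \<Rightarrow> 'w) \<Rightarrow> nat \<Rightarrow> ('r list \<Rightarrow> 'v \<Rightarrow> 'w) set set" where
  "Ext iota A actV actW n = {f. cocycle iota A actV actW n f} // ext_rel iota A actV actW n"

definition res_cochain :: "'r set \<Rightarrow> ('r list \<Rightarrow> 'v \<Rightarrow> 'w::zero) \<Rightarrow> 'r list \<Rightarrow> 'v \<Rightarrow> 'w" where
  "res_cochain A f = (\<lambda>xs v. if set xs \<subseteq> A then f xs v else 0)"

definition ext_res :: "('f::field \<Rightarrow> 'r::ring_1) \<Rightarrow> 'r set \<Rightarrow> ('r \<Rightarrow> 'v::ab_group_add \<Rightarrow> 'v)
    \<Rightarrow> ('r \<Rightarrow> 'w::ab_group_add \<Rightarrow> 'w) \<Rightarrow> nat \<Rightarrow> ('r list \<Rightarrow> 'v \<Rightarrow> 'w) set \<Rightarrow> ('r list \<Rightarrow> 'v \<Rightarrow> 'w) set" where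
  "ext_res iota A actV actW n E = ext_rel iota A actV actW n `` {res_cochain A (SOME f. f \<in> E)}"

end

(* Let e = |Z|^-1 \<Sum>\<^sub>z \<omega>(z)^-1 z (eZ below) and let e' (eH) be the analogous element for
   \<Lambda> \<inter> Z. As |Z| is prime to p, these are central idempotents that act as the identity on V and W.
   Since \<Lambda>' is the crossed product of \<Lambda> with Y, right multiplication by e maps \<Lambda> e' bijectively
   onto \<Lambda>' e = \<Lambda> e. This gives an algebra map \<chi> : \<Lambda>' \<rightarrow> \<Lambda> (lam_proj) with \<chi>(x) e = x e, so
   \<chi>(x) acts on V and W as x does. Pulling bar cochains back along \<chi> inverts restriction up to
   pulling back along x \<mapsto> x e' or x \<mapsto> x e, and pulling back along right multiplication by a
   central idempotent that acts trivially is homotopic to the identity via the prism homotopy. *)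

theory Submission
  imports Defs
begin

lemma sgnw_simps [simp]:
  "sgnw 0 w = w" "sgnw (Suc k) w = - sgnw k w" "sgnw k (0::'w::ab_group_add) = 0"
  by (auto simp: sgnw_def)

lemma sgnw_add: "sgnw k (a + b) = sgnw k a + sgnw k (b::'w::ab_group_add)"
  and sgnw_minus: "sgnw k (- a) = - sgnw k a"
  and sgnw_diff: "sgnw k (a - b) = sgnw k a - sgnw k b"
  and sgnw_sgnw: "sgnw k (sgnw j a) = sgnw (k + j) a"
  and sgnw_double: "sgnw (k + k) a = a"
  and sgnw_sum: "sgnw k (sum g S) = (\<Sum>x\<in>S. sgnw k (g x))"
  by (auto simp: sgnw_def sum_negf)

lemma lmoduleD:
  assumes "lmodule act"
  shows "act (a + b) v = act a v + act b v" "act a (v + w) = act a v + act a w"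
    "act (a * b) v = act a (act b v)" "act 1 v = v"
  using assms unfolding lmodule_def by auto

lemma lmodule_zero:
  assumes "lmodule act" shows "act a 0 = 0" "act 0 v = 0"
  using lmoduleD(1)[OF assms, of 0 0 v] lmoduleD(2)[OF assms, of a 0 0] by simp_all

lemma lmodule_minus:
  assumes "lmodule act" shows "act a (- w) = - act a w" "act a (v - w) = act a v - act a w"
proof -
  have "act a (- w) + act a w = 0"
    using lmoduleD(2)[OF assms, of a "- w" w] lmodule_zero[OF assms] by simp
  then show "act a (- w) = - act a w" by (simp add: eq_neg_iff_add_eq_0)
  then show "act a (v - w) = act a v - act a w" using lmoduleD(2)[OF assms, of a v "- w"] by simp
qed

lemma lmodule_sum_right:
  assumes "lmodule act" shows "act a (sum g S) = (\<Sum>x\<in>S. act a (g x))"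
  by (induction S rule: infinite_finite_induct) (auto simp: lmodule_zero[OF assms] lmoduleD[OF assms])

lemma lmodule_sum_left:
  assumes "lmodule act" shows "act (sum g S) v = (\<Sum>x\<in>S. act (g x) v)"
  by (induction S rule: infinite_finite_induct) (auto simp: lmodule_zero[OF assms] lmoduleD[OF assms])

lemma lmodule_sgnw:
  assumes "lmodule act" shows "act a (sgnw k w) = sgnw k (act a w)"
  by (simp add: sgnw_def lmodule_minus[OF assms])

lemma falgebraD:
  assumes "falgebra iota"
  shows "iota 1 = 1" "iota (a + b) = iota a + iota b" "iota (a * b) = iota a * iota b"
    "iota c * x = x * iota c"
  using assms unfolding falgebra_def by blast+

lemma falgebra_zero: assumes "falgebra iota" shows "iota 0 = 0"
  using falgebraD(2)[OF assms, of 0 0] by simp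

lemma falgebra_of_nat: assumes "falgebra iota" shows "iota (of_nat n) = of_nat n"
  by (induction n) (auto simp: falgebraD[OF assms] falgebra_zero[OF assms])

lemma subalgebraD:
  assumes "subalgebra iota A"
  shows "x \<in> A \<Longrightarrow> y \<in> A \<Longrightarrow> x + y \<in> A" "x \<in> A \<Longrightarrow> y \<in> A \<Longrightarrow> x * y \<in> A"
    "x \<in> A \<Longrightarrow> - x \<in> A" "iota c \<in> A"
  using assms unfolding subalgebra_def by auto

lemma subalgebra_UNIV: "subalgebra iota UNIV"
  unfolding subalgebra_def by simp

lemma subalgebra_sum:
  assumes "subalgebra iota A" "falgebra iota" "\<And>x. x \<in> S \<Longrightarrow> g x \<in> A"
  shows "sum g S \<in> A"
  using assms(3)
proof (induction S rule: infinite_finite_induct)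
  case (insert x S)
  then show ?case using subalgebraD(1)[OF assms(1)] by simp
qed (use subalgebraD(4)[OF assms(1), of 0] falgebra_zero[OF assms(2)] in simp_all)

lemma quotient_class_rep:
  assumes R: "equiv A R" and S: "equiv B S" and r: "\<And>a a'. (a, a') \<in> R \<Longrightarrow> (r a, r a') \<in> S"
    and X: "X \<in> A // R" and a: "a \<in> X"
  shows "S `` {r (SOME a. a \<in> X)} = S `` {r a}"
proof -
  have "(SOME a. a \<in> X) \<in> X" using a by (rule someI)
  then have "((SOME a. a \<in> X), a) \<in> R" using quotient_eq_iff[OF R X X _ a] by blast
  then show ?thesis by (rule equiv_class_eq[OF S r])
qed

lemma bij_betw_quotient_map:
  assumes R: "equiv A R" and S: "equiv B S"
    and r: "\<And>a. a \<in> A \<Longrightarrow> r a \<in> B" "\<And>a a'. (a, a') \<in> R \<Longrightarrow> (r a, r a') \<in> S"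
    and e: "\<And>b b'. (b, b') \<in> S \<Longrightarrow> (e b, e b') \<in> R"
    and er: "\<And>a. a \<in> A \<Longrightarrow> (e (r a), a) \<in> R" and re: "\<And>b. b \<in> B \<Longrightarrow> (r (e b), b) \<in> S"
  shows "bij_betw (\<lambda>X. S `` {r (SOME a. a \<in> X)}) (A // R) (B // S)"
proof -
  let ?f = "\<lambda>X. S `` {r (SOME a. a \<in> X)}"
  have f_class: "?f (R `` {a}) = S `` {r a}" if "a \<in> A" for a
  proof (rule quotient_class_rep[OF R S _ quotientI[OF that]])
    show "a \<in> R `` {a}" using equiv_class_self[OF R that] .
  qed (rule r(2))
  have e_in_A: "e b \<in> A" if "b \<in> B" for b
  proof -
    have "(b, b) \<in> S" using equiv_class_self[OF S that] by simp
    then show ?thesis using e equiv_class_eq_iff[OF R] by blast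
  qed
  show ?thesis
  proof (rule bij_betw_imageI)
    show "inj_on ?f (A // R)"
    proof (rule inj_onI)
      fix X X' assume "X \<in> A // R" "X' \<in> A // R" and eq: "?f X = ?f X'"
      then obtain a a' where a: "a \<in> A" "X = R `` {a}" and a': "a' \<in> A" "X' = R `` {a'}"
        by (auto elim!: quotientE)
      have "(r a, r a') \<in> S"
        using eq f_class[OF a(1)] f_class[OF a'(1)] eq_equiv_class_iff[OF S r(1)[OF a(1)] r(1)[OF a'(1)]]
        unfolding a a' by simp
      then have "R `` {e (r a)} = R `` {e (r a')}" by (rule equiv_class_eq[OF R e])
      then show "X = X'"
        unfolding a a' equiv_class_eq[OF R er[OF a(1)]] equiv_class_eq[OF R er[OF a'(1)]] .
    qed
    show "?f ` (A // R) = B // S"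
    proof
      show "?f ` (A // R) \<subseteq> B // S"
        using f_class quotientI[OF r(1)] by (auto elim!: quotientE)
      show "B // S \<subseteq> ?f ` (A // R)"
      proof
        fix Y assume "Y \<in> B // S"
        then obtain b where b: "b \<in> B" "Y = S `` {b}" by (auto elim: quotientE)
        then have "Y = ?f (R `` {e b})"
          using f_class[OF e_in_A[OF b(1)]] equiv_class_eq[OF S re[OF b(1)]] by simp
        then show "Y \<in> ?f ` (A // R)"
          using quotientI[OF e_in_A[OF b(1)]] by blast
      qed
    qed
  qed
qed

lemma of_nat_card_nonzero:
  assumes "prime p" "CHAR('f::field) = p" "coprime n p"
  shows "of_nat n \<noteq> (0::'f)"
proof
  assume "of_nat n = (0::'f)"
  then have "p dvd n" using assms(2) by (simp add: of_nat_eq_0_iff_char_dvd)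
  then have "is_unit p" using assms(3) coprime_common_divisor[of n p p] by simp
  then show False using assms(1) by simp
qed

lemma acts_by_character_cong:
  assumes "\<forall>x\<in>Z. \<forall>y\<in>Z. x * y \<in> Z" "\<forall>z\<in>Z. om z = om' z"
  shows "acts_by_character iota Z act om' \<longleftrightarrow> acts_by_character iota Z act om"
  using assms unfolding acts_by_character_def by auto

section \<open>Bar cochains and their pullbacks\<close>

lemma adm_update: "adm A n xs \<Longrightarrow> y \<in> A \<Longrightarrow> adm A n (xs[i := y])"
  unfolding adm_def by (auto dest: set_update_subset_insert[THEN subsetD])

lemma adm_nth: "adm A n xs \<Longrightarrow> i < n \<Longrightarrow> xs ! i \<in> A"
  unfolding adm_def by auto

lemma cochainI:
  assumes "\<And>xs v. \<not> adm A n xs \<Longrightarrow> f xs v = 0"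
    and "\<And>xs v v'. adm A n xs \<Longrightarrow> f xs (v + v') = f xs v + f xs v'"
    and "\<And>xs c v. adm A n xs \<Longrightarrow> f xs (actV (iota c) v) = actW (iota c) (f xs v)"
    and "\<And>xs i y v. adm A n xs \<Longrightarrow> i < n \<Longrightarrow> y \<in> A \<Longrightarrow>
           f (xs[i := xs ! i + y]) v = f xs v + f (xs[i := y]) v"
    and "\<And>xs i c v. adm A n xs \<Longrightarrow> i < n \<Longrightarrow> f (xs[i := iota c * xs ! i]) v = actW (iota c) (f xs v)"
  shows "cochain iota A actV actW n f"
  unfolding cochain_def using assms by blast

lemma cochainD:
  assumes "cochain iota A actV actW n f"
  shows "\<not> adm A n xs \<Longrightarrow> f xs v = 0"
    and "adm A n xs \<Longrightarrow> f xs (v + v') = f xs v + f xs v'"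
    and "adm A n xs \<Longrightarrow> f xs (actV (iota c) v) = actW (iota c) (f xs v)"
    and "adm A n xs \<Longrightarrow> i < n \<Longrightarrow> y \<in> A \<Longrightarrow> f (xs[i := xs ! i + y]) v = f xs v + f (xs[i := y]) v"
    and "adm A n xs \<Longrightarrow> i < n \<Longrightarrow> f (xs[i := iota c * xs ! i]) v = actW (iota c) (f xs v)"
  using assms unfolding cochain_def by blast+

lemma cocycleD:
  "cocycle iota A actV actW n f \<Longrightarrow> cochain iota A actV actW n f"
  "cocycle iota A actV actW n f \<Longrightarrow> adm A (Suc n) xs \<Longrightarrow> bar_d actV actW n f xs v = 0"
  unfolding cocycle_def by blast+

lemma coboundary_Suc_iff:
  "coboundary iota A actV actW (Suc m) f \<longleftrightarrow> cochain iota A actV actW (Suc m) f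
     \<and> (\<exists>g. cochain iota A actV actW m g \<and> (\<forall>xs v. adm A (Suc m) xs \<longrightarrow> f xs v = bar_d actV actW m g xs v))"
  unfolding coboundary_def by simp

lemma merge_0_Cons_Cons [simp]: "merge 0 (x # y # xs) = x * y # xs"
  unfolding merge_def by simp

lemma merge_Suc_Cons [simp]: "merge (Suc j) (x # xs) = x # merge j xs"
  unfolding merge_def by simp

lemma adm_merge:
  assumes "subalgebra iota A" "adm A (Suc n) xs" "j < n"
  shows "adm A n (merge j xs)"
proof -
  have "xs ! j * xs ! Suc j \<in> A"
    using assms by (intro subalgebraD(2)[OF assms(1)] adm_nth[of A "Suc n"]) auto
  then show ?thesis
    using assms(2,3) unfolding adm_def merge_def by (auto dest: in_set_takeD in_set_dropD)
qed

lemma map_merge: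
  "Suc j < length xs \<Longrightarrow> th (xs ! j * xs ! Suc j) = th (xs ! j) * th (xs ! Suc j)
    \<Longrightarrow> map th (merge j xs) = merge j (map th xs)"
  unfolding merge_def by (simp add: take_map drop_map)

definition pull ::
    "('r \<Rightarrow> 'r) \<Rightarrow> 'r set \<Rightarrow> nat \<Rightarrow> ('r list \<Rightarrow> 'v \<Rightarrow> 'w::zero) \<Rightarrow> 'r list \<Rightarrow> 'v \<Rightarrow> 'w" where
  "pull th A n g = (\<lambda>xs v. if adm A n xs then g (map th xs) v else 0)"

locale bar_complex =
  fixes iota :: "'f::field \<Rightarrow> 'r::ring_1"
    and actV :: "'r \<Rightarrow> 'v::ab_group_add \<Rightarrow> 'v"
    and actW :: "'r \<Rightarrow> 'w::ab_group_add \<Rightarrow> 'w"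
  assumes lmodule_V: "lmodule actV" and lmodule_W: "lmodule actW"
begin

lemmas V_simps = lmoduleD[OF lmodule_V] lmodule_zero[OF lmodule_V] lmodule_minus[OF lmodule_V]
lemmas W_simps = lmoduleD[OF lmodule_W] lmodule_zero[OF lmodule_W] lmodule_minus[OF lmodule_W]

abbreviation "cochains A n \<equiv> cochain iota A actV actW n"
abbreviation "cocycles A n \<equiv> cocycle iota A actV actW n"
abbreviation "coboundaries A n \<equiv> coboundary iota A actV actW n"
abbreviation "cohomologous A n \<equiv> ext_rel iota A actV actW n"
abbreviation "d n \<equiv> bar_d actV actW n"

lemma cochain_add: "cochains A n f \<Longrightarrow> cochains A n g \<Longrightarrow> cochains A n (\<lambda>xs v. f xs v + g xs v)"
  and cochain_minus: "cochains A n f \<Longrightarrow> cochains A n (\<lambda>xs v. - f xs v)"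
  and cochain_zero: "cochains A n (\<lambda>xs v. 0)"
  unfolding cochain_def by (auto simp: W_simps algebra_simps)

lemma bar_d_add: "d n (\<lambda>xs v. f xs v + g xs v) xs v = d n f xs v + d n g xs v"
  unfolding bar_d_def by (simp only: W_simps sgnw_add sum.distrib) (simp add: algebra_simps)

lemma bar_d_minus: "d n (\<lambda>xs v. - f xs v) xs v = - d n f xs v"
  unfolding bar_d_def by (simp only: W_simps sgnw_minus sum_negf) (simp add: algebra_simps)

lemma bar_d_zero: "d n (\<lambda>xs v. 0) xs v = 0"
  unfolding bar_d_def by (simp add: W_simps)

lemma coboundary_add:
  assumes "coboundaries A n f" "coboundaries A n g"
  shows "coboundaries A n (\<lambda>xs v. f xs v + g xs v)"
proof (cases n)
  case 0
  then show ?thesis using assms by (auto simp: coboundary_def cochain_zero)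
next
  case (Suc m)
  with assms obtain f' g' where "cochains A m f'" "\<forall>xs v. adm A n xs \<longrightarrow> f xs v = d m f' xs v"
    and "cochains A m g'" "\<forall>xs v. adm A n xs \<longrightarrow> g xs v = d m g' xs v"
    unfolding coboundary_def by auto
  with assms Suc show ?thesis
    by (auto simp: coboundary_Suc_iff cochain_add bar_d_add intro!: exI[of _ "\<lambda>xs v. f' xs v + g' xs v"])
qed

lemma coboundary_minus:
  assumes "coboundaries A n f"
  shows "coboundaries A n (\<lambda>xs v. - f xs v)"
proof (cases n)
  case 0
  then show ?thesis using assms by (auto simp: coboundary_def cochain_zero)
next
  case (Suc m)
  with assms obtain f' where "cochains A m f'" "\<forall>xs v. adm A n xs \<longrightarrow> f xs v = d m f' xs v"
    unfolding coboundary_def by auto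
  with assms Suc show ?thesis
    by (auto simp: coboundary_Suc_iff cochain_minus bar_d_minus intro!: exI[of _ "\<lambda>xs v. - f' xs v"])
qed

lemma coboundary_zero: "coboundaries A n (\<lambda>xs v. 0)"
  by (cases n) (auto simp: coboundary_def cochain_zero bar_d_zero intro!: exI[of _ "\<lambda>xs v. 0"])

lemma equiv_cohomologous: "equiv {f. cocycles A n f} (cohomologous A n)"
proof (rule equivI)
  show "cohomologous A n \<subseteq> {f. cocycles A n f} \<times> {f. cocycles A n f}"
    unfolding ext_rel_def by auto
  show "refl_on {f. cocycles A n f} (cohomologous A n)"
    unfolding refl_on_def ext_rel_def using coboundary_zero by auto
  show "sym (cohomologous A n)"
  proof (rule symI)
    fix f g assume "(f, g) \<in> cohomologous A n"
    then have "coboundaries A n (\<lambda>xs v. - (f xs v - g xs v))"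
      unfolding ext_rel_def using coboundary_minus by blast
    with \<open>(f, g) \<in> cohomologous A n\<close> show "(g, f) \<in> cohomologous A n"
      unfolding ext_rel_def by simp
  qed
  show "trans (cohomologous A n)"
  proof (rule transI)
    fix f g h assume fg: "(f, g) \<in> cohomologous A n" and gh: "(g, h) \<in> cohomologous A n"
    then have "coboundaries A n (\<lambda>xs v. (f xs v - g xs v) + (g xs v - h xs v))"
      unfolding ext_rel_def by (intro coboundary_add) auto
    with fg gh show "(f, h) \<in> cohomologous A n"
      unfolding ext_rel_def by simp
  qed
qed

lemma cohomologous_sym: "(f, g) \<in> cohomologous A n \<Longrightarrow> (g, f) \<in> cohomologous A n"
  and cohomologous_trans:
    "(f, g) \<in> cohomologous A n \<Longrightarrow> (g, h) \<in> cohomologous A n \<Longrightarrow> (f, h) \<in> cohomologous A n"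
  using equiv_cohomologous[of A n] unfolding equiv_def by (blast dest: symD transD)+

lemma cohomologous_cocycles: "(f, g) \<in> cohomologous A n \<Longrightarrow> cocycles A n f \<and> cocycles A n g"
  unfolding ext_rel_def by blast

lemma cohomologousI:
  "cocycles A n f \<Longrightarrow> cocycles A n g \<Longrightarrow> coboundaries A n (\<lambda>xs v. f xs v - g xs v)
    \<Longrightarrow> (f, g) \<in> cohomologous A n"
  unfolding ext_rel_def by simp

definition compatible_hom :: "('r \<Rightarrow> 'r) \<Rightarrow> 'r set \<Rightarrow> 'r set \<Rightarrow> bool" where
  "compatible_hom th A B \<longleftrightarrow> (\<forall>x\<in>A. th x \<in> B)
     \<and> (\<forall>x\<in>A. \<forall>y\<in>A. th (x + y) = th x + th y \<and> th (x * y) = th x * th y)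
     \<and> (\<forall>c. \<forall>x\<in>A. th (iota c * x) = iota c * th x)
     \<and> (\<forall>x\<in>A. actV (th x) = actV x \<and> actW (th x) = actW x)"

lemma compatible_homD:
  assumes "compatible_hom th A B" and "x \<in> A"
  shows "th x \<in> B" "y \<in> A \<Longrightarrow> th (x + y) = th x + th y" "y \<in> A \<Longrightarrow> th (x * y) = th x * th y"
    "th (iota c * x) = iota c * th x" "actV (th x) = actV x" "actW (th x) = actW x"
  using assms unfolding compatible_hom_def by blast+

lemma compatible_hom_adm: "compatible_hom th A B \<Longrightarrow> adm A n xs \<Longrightarrow> adm B n (map th xs)"
  unfolding adm_def using compatible_homD(1) by auto

lemma compatible_hom_id: "A \<subseteq> B \<Longrightarrow> compatible_hom id A B"
  unfolding compatible_hom_def by auto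

lemma compatible_hom_mono: "compatible_hom th A B \<Longrightarrow> B \<subseteq> B' \<Longrightarrow> compatible_hom th A B'"
  unfolding compatible_hom_def by blast

lemma pull_adm: "adm A n xs \<Longrightarrow> pull th A n g xs v = g (map th xs) v"
  by (simp add: pull_def)

lemma pull_cochain:
  assumes A: "subalgebra iota A" and th: "compatible_hom th A B" and g: "cochains B n g"
  shows "cochains A n (pull th A n g)"
proof (rule cochainI)
  note ys = compatible_hom_adm[OF th]
  show "pull th A n g xs v = 0" if "\<not> adm A n xs" for xs v
    using that by (simp add: pull_def)
  show "pull th A n g xs (v + v') = pull th A n g xs v + pull th A n g xs v'"
    if "adm A n xs" for xs v v'
    using that cochainD(2)[OF g ys] by (simp add: pull_adm)
  show "pull th A n g xs (actV (iota c) v) = actW (iota c) (pull th A n g xs v)"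
    if "adm A n xs" for xs c v
    using that cochainD(3)[OF g ys] by (simp add: pull_adm)
  show "pull th A n g (xs[i := xs ! i + y]) v = pull th A n g xs v + pull th A n g (xs[i := y]) v"
    if xs: "adm A n xs" and i: "i < n" and y: "y \<in> A" for xs i y v
  proof -
    have xi: "xs ! i \<in> A" using xs i by (rule adm_nth)
    have "map th (xs[i := xs ! i + y]) = (map th xs)[i := map th xs ! i + th y]"
      using compatible_homD(2)[OF th xi y] i xs by (simp add: map_update adm_def)
    moreover have "adm A n (xs[i := xs ! i + y])" "adm A n (xs[i := y])"
      using xs xi y subalgebraD(1)[OF A] by (simp_all add: adm_update)
    ultimately show ?thesis
      using cochainD(4)[OF g ys[OF xs] i compatible_homD(1)[OF th y]] xs
      by (simp add: pull_adm map_update)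
  qed
  show "pull th A n g (xs[i := iota c * xs ! i]) v = actW (iota c) (pull th A n g xs v)"
    if xs: "adm A n xs" and i: "i < n" for xs i c v
  proof -
    have xi: "xs ! i \<in> A" using xs i by (rule adm_nth)
    have "map th (xs[i := iota c * xs ! i]) = (map th xs)[i := iota c * map th xs ! i]"
      using compatible_homD(4)[OF th xi] i xs by (simp add: map_update adm_def)
    moreover have "adm A n (xs[i := iota c * xs ! i])"
      using xs xi subalgebraD(2,4)[OF A] by (simp add: adm_update)
    ultimately show ?thesis
      using cochainD(5)[OF g ys[OF xs] i] xs by (simp add: pull_adm)
  qed
qed

lemma pull_bar_d:
  assumes A: "subalgebra iota A" and th: "compatible_hom th A B" and xs: "adm A (Suc n) xs"
  shows "d n (pull th A n g) xs v = d n g (map th xs) v"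
proof -
  have len: "length xs = Suc n" and xsA: "set xs \<subseteq> A" using xs unfolding adm_def by auto
  then have ne: "xs \<noteq> []" by auto
  with xsA have hd: "hd xs \<in> A" and last: "last xs \<in> A"
    using hd_in_set last_in_set by blast+
  have "adm A n (tl xs)" "adm A n (butlast xs)"
    using len xsA by (auto simp: adm_def dest: list.set_sel(2)[rotated] in_set_butlastD)
  moreover have "pull th A n g (merge j xs) v = g (merge j (map th xs)) v" if j: "j < n" for j
  proof -
    have "map th (merge j xs) = merge j (map th xs)"
      using j len xsA by (intro map_merge compatible_homD(3)[OF th]) auto
    then show ?thesis using adm_merge[OF A xs j] by (simp add: pull_adm)
  qed
  ultimately show ?thesis
    unfolding bar_d_def
    using len hd_map[OF ne, of th] last_map[OF ne, of th] compatible_homD(5,6)[OF th hd] compatible_homD(5,6)[OF th last]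
    by (simp add: pull_adm map_tl map_butlast)
qed

lemma pull_cocycle:
  assumes A: "subalgebra iota A" and th: "compatible_hom th A B" and g: "cocycles B n g"
  shows "cocycles A n (pull th A n g)"
  unfolding cocycle_def
  using pull_cochain[OF A th cocycleD(1)[OF g]] pull_bar_d[OF A th] cocycleD(2)[OF g]
    compatible_hom_adm[OF th] by simp

lemma pull_coboundary:
  assumes A: "subalgebra iota A" and th: "compatible_hom th A B" and g: "coboundaries B n g"
  shows "coboundaries A n (pull th A n g)"
proof (cases n)
  case 0
  then show ?thesis
    using g pull_cochain[OF A th] unfolding coboundary_def by (auto simp: pull_def)
next
  case (Suc m)
  with g obtain h where h: "cochains B m h" "\<forall>xs v. adm B n xs \<longrightarrow> g xs v = d m h xs v"
    unfolding coboundary_def by auto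
  have "pull th A n g xs v = d m (pull th A m h) xs v" if "adm A n xs" for xs v
    using that h(2) Suc pull_bar_d[OF A th] compatible_hom_adm[OF th] by (simp add: pull_adm)
  then show ?thesis
    using Suc g pull_cochain[OF A th] pull_cochain[OF A th h(1)]
    unfolding coboundary_Suc_iff coboundary_def by auto
qed

lemma pull_cohomologous:
  assumes A: "subalgebra iota A" and th: "compatible_hom th A B"
    and fg: "(f, g) \<in> cohomologous B n"
  shows "(pull th A n f, pull th A n g) \<in> cohomologous A n"
proof -
  have "pull th A n (\<lambda>xs v. f xs v - g xs v) = (\<lambda>xs v. pull th A n f xs v - pull th A n g xs v)"
    by (auto simp: pull_def fun_eq_iff)
  then show ?thesis
    using fg pull_coboundary[OF A th, of n "\<lambda>xs v. f xs v - g xs v"] pull_cocycle[OF A th]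
    unfolding ext_rel_def by auto
qed

lemma pull_pull: "\<forall>x\<in>A. th x \<in> B \<Longrightarrow> pull th A n (pull th' B n g) = pull (th' \<circ> th) A n g"
  by (auto simp: pull_def fun_eq_iff adm_def)

lemma pull_cong: "\<forall>x\<in>A. th x = th' x \<Longrightarrow> pull th A n g = pull th' A n g"
  unfolding pull_def adm_def fun_eq_iff by (metis (mono_tags, lifting) map_eq_conv subsetD)

lemma res_cochain_eq_pull_id: "cochains UNIV n f \<Longrightarrow> res_cochain A f = pull id A n f"
  by (auto simp: pull_def fun_eq_iff adm_def res_cochain_def cochain_def)

end

section \<open>The prism homotopy\<close>

definition prism_list :: "'r::ring_1 \<Rightarrow> nat \<Rightarrow> 'r list \<Rightarrow> 'r list" where
  "prism_list u k xs = map (\<lambda>x. x * u) (take k xs) @ u # drop k xs"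

definition scale_prefix :: "'r::ring_1 \<Rightarrow> nat \<Rightarrow> 'r list \<Rightarrow> 'r list" where
  "scale_prefix u k xs = map (\<lambda>x. x * u) (take k xs) @ drop k xs"

lemma prism_list_simps [simp]:
  "prism_list u 0 xs = u # xs"
  "prism_list u k [] = [u]"
  "prism_list u (Suc k) (x # xs) = x * u # prism_list u k xs"
  "length (prism_list u k xs) = Suc (length xs)"
  by (simp_all add: prism_list_def)

lemma prism_list_nth:
  "k \<le> length xs \<Longrightarrow> i \<le> length xs \<Longrightarrow>
    prism_list u k xs ! i = (if i < k then xs ! i * u else if i = k then u else xs ! (i - 1))"
  by (auto simp: prism_list_def nth_append min_def nth_Cons')

lemma prism_list_update:
  assumes "i < length ys" "k \<le> length ys"
  shows "prism_list u k (ys[i := a]) =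
    (if i < k then (prism_list u k ys)[i := a * u] else (prism_list u k ys)[Suc i := a])"
  using assms by (intro nth_equalityI) (auto simp: prism_list_nth nth_list_update)

lemma prism_list_full: "prism_list u (length xs) xs = map (\<lambda>x. x * u) xs @ [u]"
  by (simp add: prism_list_def)

lemma prism_list_butlast_last:
  "k < length xs \<Longrightarrow> butlast (prism_list u k xs) = prism_list u k (butlast xs)"
  "k < length xs \<Longrightarrow> last (prism_list u k xs) = last xs"
  by (simp_all add: prism_list_def butlast_append take_butlast butlast_drop last_drop)

lemma scale_prefix_simps [simp]:
  "scale_prefix u 0 xs = xs"
  "scale_prefix u k [] = []"
  "scale_prefix u (Suc k) (x # xs) = x * u # scale_prefix u k xs"
  by (simp_all add: scale_prefix_def)

text \<open>\<open>F k j\<close> is the shape of the \<open>j\<close>-th face of the \<open>k\<close>-th prism list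
  (merge_prism_list below). In the alternating sum the faces \<open>Q\<close> cancel in
  pairs and the faces \<open>G\<close> reassemble into prisms of faces.\<close>
lemma sum_prism_faces:
  fixes G :: "nat \<Rightarrow> nat \<Rightarrow> 'w::ab_group_add" and Q :: "nat \<Rightarrow> 'w"
  defines "F k j \<equiv> if Suc j < k then G (k - 1) j else if Suc j = k then Q k
                    else if j = k then Q (Suc k) else G k (j - 1)"
  assumes k: "k \<le> Suc m"
  shows "(\<Sum>j<Suc m. sgnw (Suc j) (F k j))
    = (\<Sum>j<k - 1. sgnw (Suc j) (G (k - 1) j)) + (\<Sum>j\<in>{k..<m}. sgnw j (G k j))
      + (if 0 < k then sgnw k (Q k) else 0) - (if k < Suc m then sgnw k (Q (Suc k)) else 0)"
proof (cases k)
  case 0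
  then have "(\<Sum>j<Suc m. sgnw (Suc j) (F k j)) = - Q 1 + (\<Sum>j<m. sgnw (Suc (Suc j)) (G 0 j))"
    unfolding F_def by (simp add: sum.lessThan_Suc_shift del: sum.lessThan_Suc)
  with 0 show ?thesis by (simp add: lessThan_atLeast0)
next
  case (Suc k')
  let ?F = "\<lambda>j. sgnw (Suc j) (F k j)"
  have k': "k' \<le> m" using k Suc by simp
  have "(\<Sum>j<Suc m. ?F j) = (\<Sum>j<k'. ?F j) + (\<Sum>j\<in>{k'..<Suc m}. ?F j)"
    by (simp only: lessThan_atLeast0 sum.atLeastLessThan_concat[OF le0 le_SucI[OF k']])
  also have "(\<Sum>j\<in>{k'..<Suc m}. ?F j) = ?F k' + (\<Sum>j\<in>{k'..<m}. ?F (Suc j))"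
    using k' by (simp only: sum.atLeast_Suc_lessThan[of k' "Suc m"] sum.shift_bounds_Suc_ivl)
  also have "(\<Sum>j<k'. ?F j) = (\<Sum>j<k - 1. sgnw (Suc j) (G (k - 1) j))"
    using Suc by (simp add: F_def)
  also have "?F k' = sgnw k (Q k)"
    using Suc by (simp add: F_def)
  also have "(\<Sum>j\<in>{k'..<m}. ?F (Suc j))
      = (if k < Suc m then - sgnw k (Q (Suc k)) else 0) + (\<Sum>j\<in>{k..<m}. sgnw j (G k j))"
  proof (cases "k' < m")
    case True
    then have "(\<Sum>j\<in>{k'..<m}. ?F (Suc j)) = ?F (Suc k') + (\<Sum>j\<in>{k..<m}. ?F (Suc j))"
      using Suc by (simp add: sum.atLeast_Suc_lessThan)
    moreover have "(\<Sum>j\<in>{k..<m}. ?F (Suc j)) = (\<Sum>j\<in>{k..<m}. sgnw j (G k j))"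
      using Suc by (intro sum.cong) (auto simp: F_def sgnw_def)
    ultimately show ?thesis using True Suc by (simp add: F_def sgnw_def)
  qed (use Suc k' in simp)
  finally show ?thesis using Suc by (simp add: algebra_simps)
qed

lemma alternating_sum_prism_faces:
  fixes G :: "nat \<Rightarrow> nat \<Rightarrow> 'w::ab_group_add" and Q :: "nat \<Rightarrow> 'w"
  defines "F k j \<equiv> if Suc j < k then G (k - 1) j else if Suc j = k then Q k
                    else if j = k then Q (Suc k) else G k (j - 1)"
  shows "(\<Sum>k\<le>Suc m. sgnw k (\<Sum>j<Suc m. sgnw (Suc j) (F k j)))
    = - (\<Sum>j<m. sgnw (Suc j) (\<Sum>k\<le>m. sgnw k (G k j)))"
proof -
  have "(\<Sum>k\<le>Suc m. sgnw k (\<Sum>j<Suc m. sgnw (Suc j) (F k j)))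
    = (\<Sum>k\<le>Suc m. sgnw k (\<Sum>j<k - 1. sgnw (Suc j) (G (k - 1) j)))
      + (\<Sum>k\<le>Suc m. sgnw k (\<Sum>j\<in>{k..<m}. sgnw j (G k j)))
      + (\<Sum>k\<le>Suc m. sgnw k (if 0 < k then sgnw k (Q k) else 0))
      - (\<Sum>k\<le>Suc m. sgnw k (if k < Suc m then sgnw k (Q (Suc k)) else 0))"
    unfolding F_def using sum_prism_faces[of _ m G Q]
    by (simp add: sgnw_add sgnw_diff sum.distrib sum_subtractf)
  also have "(\<Sum>k\<le>Suc m. sgnw k (\<Sum>j<k - 1. sgnw (Suc j) (G (k - 1) j)))
      = (\<Sum>k\<le>m. \<Sum>j<k. sgnw (k + j) (G k j))"
    by (simp only: sum.atMost_Suc_shift) (simp add: sgnw_sum sgnw_minus sgnw_sgnw)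
  also have "(\<Sum>k\<le>Suc m. sgnw k (\<Sum>j\<in>{k..<m}. sgnw j (G k j)))
      = (\<Sum>k\<le>m. \<Sum>j\<in>{k..<m}. sgnw (k + j) (G k j))"
    by (simp add: sgnw_sum sgnw_sgnw)
  also have "(\<Sum>k\<le>Suc m. sgnw k (if 0 < k then sgnw k (Q k) else 0)) = (\<Sum>k\<le>m. Q (Suc k))"
    by (simp only: sum.atMost_Suc_shift) (simp add: sgnw_minus sgnw_sgnw sgnw_double)
  also have "(\<Sum>k\<le>Suc m. sgnw k (if k < Suc m then sgnw k (Q (Suc k)) else 0)) = (\<Sum>k\<le>m. Q (Suc k))"
    by (simp add: sgnw_sgnw sgnw_double)
  also have "(\<Sum>k\<le>m. \<Sum>j<k. sgnw (k + j) (G k j)) + (\<Sum>k\<le>m. \<Sum>j\<in>{k..<m}. sgnw (k + j) (G k j))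
      = (\<Sum>k\<le>m. \<Sum>j<m. sgnw (k + j) (G k j))"
    unfolding sum.distrib[symmetric]
    by (intro sum.cong refl) (simp add: lessThan_atLeast0 sum.atLeastLessThan_concat)
  also have "\<dots> = - (\<Sum>j<m. sgnw (Suc j) (\<Sum>k\<le>m. sgnw k (G k j)))"
    by (simp add: sgnw_sum sgnw_sgnw sum_negf sum.swap[of _ "{..m}"] add.commute)
  finally show ?thesis by simp
qed

locale central_idempotent = bar_complex iota actV actW
  for iota :: "'f::field \<Rightarrow> 'r::ring_1"
    and actV :: "'r \<Rightarrow> 'v::ab_group_add \<Rightarrow> 'v"
    and actW :: "'r \<Rightarrow> 'w::ab_group_add \<Rightarrow> 'w" +
  fixes A :: "'r set" and u :: 'r
  assumes subalgebra_A: "subalgebra iota A" and u_in_A: "u \<in> A" and u_idem: "u * u = u"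
    and u_central: "\<And>x. u * x = x * u"
    and u_acts_V: "\<And>v. actV u v = v" and u_acts_W: "\<And>w. actW u w = w"
begin

lemma mult_u_mult: "(x * u) * (y * u) = (x * y) * u"
  by (metis mult.assoc u_central u_idem)

lemma mult_u_u: "x * u * u = x * u"
  by (simp add: mult.assoc u_idem)

lemma merge_prism_list:
  assumes "j < length xs" "k \<le> length xs"
  shows "merge j (prism_list u k xs) =
    (if Suc j < k then prism_list u (k - 1) (merge j xs)
     else if Suc j = k then scale_prefix u k xs
     else if j = k then scale_prefix u (Suc k) xs
     else prism_list u k (merge (j - 1) xs))"
  using assms
proof (induction xs arbitrary: j k)
  case (Cons x xs)
  show ?case
  proof (cases k)
    case 0
    then show ?thesis by (cases j) (auto simp: u_central)
  next
    case (Suc k')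
    show ?thesis
    proof (cases j)
      case 0
      then show ?thesis
        using Suc Cons.prems by (cases k'; cases xs) (auto simp: mult_u_u mult_u_mult)
    next
      case (Suc j')
      then show ?thesis
        using \<open>k = Suc k'\<close> Cons.prems Cons.IH[of j' k'] by (cases j'; cases k') auto
    qed
  qed
qed simp

lemma adm_prism_list: "adm A m ys \<Longrightarrow> adm A (Suc m) (prism_list u k ys)"
  unfolding adm_def prism_list_def using u_in_A subalgebraD(2)[OF subalgebra_A _ u_in_A]
  by (auto dest: in_set_takeD in_set_dropD)

definition prism :: "nat \<Rightarrow> ('r list \<Rightarrow> 'v \<Rightarrow> 'w) \<Rightarrow> 'r list \<Rightarrow> 'v \<Rightarrow> 'w" where
  "prism m f = (\<lambda>ys v. if adm A m ys then (\<Sum>k\<le>m. sgnw k (f (prism_list u k ys) v)) else 0)"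

lemma cochain_prism_list_slot:
  assumes f: "cochains A (Suc m) f" and ys: "adm A m ys" and k: "k \<le> m" and i: "i < m"
  shows "y \<in> A \<Longrightarrow> f (prism_list u k (ys[i := ys ! i + y])) v
           = f (prism_list u k ys) v + f (prism_list u k (ys[i := y])) v"
    and "f (prism_list u k (ys[i := iota c * ys ! i])) v = actW (iota c) (f (prism_list u k ys) v)"
proof -
  have len: "length ys = m" using ys by (simp add: adm_def)
  note P = adm_prism_list[OF ys, of k]
  have slot: "prism_list u k ys ! i = ys ! i * u" if "i < k"
    using that i k len by (simp add: prism_list_nth)
  have slot': "prism_list u k ys ! Suc i = ys ! i" if "\<not> i < k"
    using that i k len by (simp add: prism_list_nth)
  show "f (prism_list u k (ys[i := ys ! i + y])) v
      = f (prism_list u k ys) v + f (prism_list u k (ys[i := y])) v" if y: "y \<in> A"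
  proof (cases "i < k")
    case True
    have "y * u \<in> A" using subalgebraD(2)[OF subalgebra_A y u_in_A] .
    then show ?thesis
      using cochainD(4)[OF f P, of i "y * u" v] True i k len
      by (simp add: prism_list_update slot distrib_right)
  next
    case False
    then show ?thesis
      using cochainD(4)[OF f P, of "Suc i" y v] y i k len by (simp add: prism_list_update slot')
  qed
  show "f (prism_list u k (ys[i := iota c * ys ! i])) v = actW (iota c) (f (prism_list u k ys) v)"
  proof (cases "i < k")
    case True
    then show ?thesis
      using cochainD(5)[OF f P, of i c v] i k len by (simp add: prism_list_update slot mult.assoc)
  next
    case False
    then show ?thesis
      using cochainD(5)[OF f P, of "Suc i" c v] i k len by (simp add: prism_list_update slot')
  qed
qed

lemma prism_cochain:
  assumes f: "cochains A (Suc m) f"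
  shows "cochains A m (prism m f)"
proof (rule cochainI)
  show "prism m f ys v = 0" if "\<not> adm A m ys" for ys v
    using that by (simp add: prism_def)
  show "prism m f ys (v + v') = prism m f ys v + prism m f ys v'" if "adm A m ys" for ys v v'
    using that cochainD(2)[OF f adm_prism_list[OF that]]
    by (simp add: prism_def sgnw_add sum.distrib)
  show "prism m f ys (actV (iota c) v) = actW (iota c) (prism m f ys v)" if "adm A m ys" for ys c v
    using that cochainD(3)[OF f adm_prism_list[OF that]]
    by (simp add: prism_def lmodule_sum_right[OF lmodule_W] lmodule_sgnw[OF lmodule_W])
  show "prism m f (ys[i := ys ! i + y]) v = prism m f ys v + prism m f (ys[i := y]) v"
    if ys: "adm A m ys" and i: "i < m" and y: "y \<in> A" for ys i y v
  proof -
    have "adm A m (ys[i := ys ! i + y])" "adm A m (ys[i := y])"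
      using ys y subalgebraD(1)[OF subalgebra_A adm_nth[OF ys i] y] by (simp_all add: adm_update)
    then show ?thesis
      using ys cochain_prism_list_slot(1)[OF f ys _ i y]
      by (simp add: prism_def sgnw_add sum.distrib)
  qed
  show "prism m f (ys[i := iota c * ys ! i]) v = actW (iota c) (prism m f ys v)"
    if ys: "adm A m ys" and i: "i < m" for ys i c v
  proof -
    have "adm A m (ys[i := iota c * ys ! i])"
      using ys subalgebraD(2,4)[OF subalgebra_A] adm_nth[OF ys i] by (simp add: adm_update)
    then show ?thesis
      using ys cochain_prism_list_slot(2)[OF f ys _ i]
      by (simp add: prism_def lmodule_sum_right[OF lmodule_W] lmodule_sgnw[OF lmodule_W])
  qed
qed

lemma alternating_sum_hd_prism_list:
  assumes "adm A m xs"
  shows "(\<Sum>k\<le>Suc m. sgnw k (actW (hd (prism_list u k (x # xs))) (f (tl (prism_list u k (x # xs))) v)))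
    = f (x # xs) v - actW x (prism m f xs v)"
  using assms
  by (simp only: sum.atMost_Suc_shift)
    (simp add: prism_def u_acts_W W_simps sum_negf lmodule_sgnw[OF lmodule_W]
      lmodule_sum_right[OF lmodule_W])

lemma alternating_sum_merge_prism_list:
  assumes xs: "adm A (Suc m) xs"
  shows "(\<Sum>k\<le>Suc m. sgnw k (\<Sum>j<Suc m. sgnw (Suc j) (f (merge j (prism_list u k xs)) v)))
    = - (\<Sum>j<m. sgnw (Suc j) (prism m f (merge j xs) v))"
proof -
  define G where "G k j = f (prism_list u k (merge j xs)) v" for k j
  define Q where "Q k = f (scale_prefix u k xs) v" for k
  define F where "F k j = (if Suc j < k then G (k - 1) j else if Suc j = k then Q k
      else if j = k then Q (Suc k) else G k (j - 1))" for k j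
  have "f (merge j (prism_list u k xs)) v = F k j" if "k \<le> Suc m" "j < Suc m" for k j
    using that xs unfolding F_def G_def Q_def adm_def by (simp add: merge_prism_list)
  then have "(\<Sum>k\<le>Suc m. sgnw k (\<Sum>j<Suc m. sgnw (Suc j) (f (merge j (prism_list u k xs)) v)))
    = (\<Sum>k\<le>Suc m. sgnw k (\<Sum>j<Suc m. sgnw (Suc j) (F k j)))"
    by simp
  also have "\<dots> = - (\<Sum>j<m. sgnw (Suc j) (\<Sum>k\<le>m. sgnw k (G k j)))"
    unfolding F_def by (rule alternating_sum_prism_faces)
  also have "\<dots> = - (\<Sum>j<m. sgnw (Suc j) (prism m f (merge j xs) v))"
    using adm_merge[OF subalgebra_A xs] by (simp add: prism_def G_def)
  finally show ?thesis .
qed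

lemma alternating_sum_last_prism_list:
  assumes xs: "adm A (Suc m) xs"
  shows "(\<Sum>k\<le>Suc m. sgnw k (sgnw (Suc (Suc m))
        (f (butlast (prism_list u k xs)) (actV (last (prism_list u k xs)) v))))
    = - sgnw (Suc m) (prism m f (butlast xs) (actV (last xs) v)) - f (map (\<lambda>x. x * u) xs) v"
proof -
  have len: "length xs = Suc m" and "adm A m (butlast xs)"
    using xs by (auto simp: adm_def dest: in_set_butlastD)
  then have "(\<Sum>k\<le>m. sgnw k (sgnw (Suc (Suc m))
        (f (butlast (prism_list u k xs)) (actV (last (prism_list u k xs)) v))))
      = sgnw (Suc (Suc m)) (prism m f (butlast xs) (actV (last xs) v))"
    by (simp add: prism_def sgnw_sum prism_list_butlast_last sgnw_sgnw add.commute)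
  moreover have "prism_list u (Suc m) xs = map (\<lambda>x. x * u) xs @ [u]"
    using prism_list_full[of u xs] len by simp
  ultimately show ?thesis
    by (simp add: u_acts_V sgnw_sgnw sgnw_def)
qed

lemma bar_d_prism:
  assumes f: "cocycles A (Suc m) f" and xs: "adm A (Suc m) xs"
  shows "d m (prism m f) xs v = f xs v - f (map (\<lambda>x. x * u) xs) v"
proof -
  obtain x xs' where xs_eq: "xs = x # xs'" using xs by (cases xs) (auto simp: adm_def)
  then have xs': "adm A m xs'" using xs by (simp add: adm_def)
  let ?X = "actW x (prism m f xs' v)"
  let ?M = "\<Sum>j<m. sgnw (Suc j) (prism m f (merge j xs) v)"
  let ?L = "sgnw (Suc m) (prism m f (butlast xs) (actV (last xs) v))"
  have "0 = (\<Sum>k\<le>Suc m. sgnw k (d (Suc m) f (prism_list u k xs) v))"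
    using cocycleD(2)[OF f adm_prism_list[OF xs]] by simp
  also have "\<dots> = f xs v - ?X + - ?M + (- ?L - f (map (\<lambda>x. x * u) xs) v)"
    unfolding bar_d_def sgnw_add sum.distrib
      alternating_sum_merge_prism_list[OF xs] alternating_sum_last_prism_list[OF xs]
    unfolding xs_eq alternating_sum_hd_prism_list[OF xs'] ..
  finally have zero: "0 = f xs v - ?X + - ?M + (- ?L - f (map (\<lambda>x. x * u) xs) v)" .
  have "d m (prism m f) xs v = ?X + ?M + ?L"
    by (simp add: bar_d_def xs_eq)
  also have "\<dots> = ?X + ?M + ?L + (f xs v - ?X + - ?M + (- ?L - f (map (\<lambda>x. x * u) xs) v))"
    unfolding zero[symmetric] by simp
  also have "\<dots> = f xs v - f (map (\<lambda>x. x * u) xs) v"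
    by (simp add: algebra_simps)
  finally show ?thesis .
qed

lemma compatible_hom_mult_u: "compatible_hom (\<lambda>x. x * u) A A"
  unfolding compatible_hom_def
  using subalgebraD(2)[OF subalgebra_A _ u_in_A] mult_u_mult
  by (auto simp: distrib_right mult.assoc fun_eq_iff V_simps W_simps u_acts_V u_acts_W)

theorem cohomologous_pull_mult_u:
  assumes f: "cocycles A n f"
  shows "(f, pull (\<lambda>x. x * u) A n f) \<in> cohomologous A n"
proof (rule cohomologousI)
  show g: "cocycles A n (pull (\<lambda>x. x * u) A n f)"
    by (rule pull_cocycle[OF subalgebra_A compatible_hom_mult_u f])
  show "coboundaries A n (\<lambda>xs v. f xs v - pull (\<lambda>x. x * u) A n f xs v)"
  proof (cases n)
    case 0
    have "f xs v - pull (\<lambda>x. x * u) A n f xs v = 0" for xs v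
      using cochainD(1)[OF cocycleD(1)[OF f]] 0 by (cases "adm A 0 xs") (auto simp: pull_def adm_def)
    then show ?thesis
      using coboundary_zero by simp
  next
    case (Suc m)
    have "cochains A n (\<lambda>xs v. f xs v - pull (\<lambda>x. x * u) A n f xs v)"
      using cochain_add[OF cocycleD(1)[OF f] cochain_minus[OF cocycleD(1)[OF g]]] by simp
    then show ?thesis
      using Suc f bar_d_prism prism_cochain[OF cocycleD(1)[OF f[unfolded Suc]]]
      by (auto simp: coboundary_Suc_iff pull_adm)
  qed
qed (rule f)

end

section \<open>Character idempotents\<close>

locale central_character =
  fixes iota :: "'f::field \<Rightarrow> 'r::ring_1" and Z :: "'r set" and om :: "'r \<Rightarrow> 'f"
  assumes falgebra: "falgebra iota" and Z: "central_unit_group Z"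
    and om_nonzero: "\<And>z. z \<in> Z \<Longrightarrow> om z \<noteq> 0"
    and om_mult: "\<And>z z'. z \<in> Z \<Longrightarrow> z' \<in> Z \<Longrightarrow> om (z * z') = om z * om z'"
begin

lemmas iota_simps = falgebraD(1-3)[OF falgebra] falgebra_zero[OF falgebra]
lemmas iota_commute = falgebraD(4)[OF falgebra]

lemma Z_finite: "finite Z" and one_in_Z: "1 \<in> Z"
  and Z_mult: "z \<in> Z \<Longrightarrow> z' \<in> Z \<Longrightarrow> z * z' \<in> Z"
  and Z_inverse: "z \<in> Z \<Longrightarrow> \<exists>z'\<in>Z. z * z' = 1 \<and> z' * z = 1"
  and Z_central: "z \<in> Z \<Longrightarrow> z * x = x * z"
  using Z unfolding central_unit_group_def by blast+

lemma Z_cancel: "z \<in> Z \<Longrightarrow> z * a = z * b \<Longrightarrow> a = b"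
  by (metis Z_inverse mult.assoc mult_1_left)

definition Z_subgroup :: "'r set \<Rightarrow> bool" where
  "Z_subgroup S \<longleftrightarrow> S \<subseteq> Z \<and> 1 \<in> S \<and> (\<forall>x\<in>S. \<forall>y\<in>S. x * y \<in> S)"

lemma Z_subgroup_Z: "Z_subgroup Z"
  using one_in_Z Z_mult unfolding Z_subgroup_def by blast

lemma Z_subgroup_finite: "Z_subgroup S \<Longrightarrow> finite S"
  using Z_finite unfolding Z_subgroup_def by (auto intro: finite_subset)

lemma Z_subgroup_translate:
  assumes S: "Z_subgroup S" and g: "g \<in> S"
  shows "(\<lambda>x. g * x) ` S = S"
proof (rule endo_inj_surj)
  show "finite S" using Z_subgroup_finite[OF S] .
  show "(\<lambda>x. g * x) ` S \<subseteq> S" using S g unfolding Z_subgroup_def by auto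
  show "inj_on (\<lambda>x. g * x) S" using Z_cancel S g by (auto simp: inj_on_def Z_subgroup_def)
qed

lemma Z_subgroup_inverse:
  assumes S: "Z_subgroup S" and g: "g \<in> S"
  obtains g' where "g' \<in> S" "g * g' = 1"
  using Z_subgroup_translate[OF S g] S unfolding Z_subgroup_def by (metis imageE)

lemma om_cancel: "z \<in> Z \<Longrightarrow> c * inverse (om z) * om z = c"
  by (simp add: om_nonzero mult.assoc)

definition char_avg :: "'r set \<Rightarrow> 'r" where
  "char_avg S = (\<Sum>g\<in>S. iota (inverse (of_nat (card S)) * inverse (om g)) * g)"

lemma char_avg_central:
  assumes "Z_subgroup S" shows "char_avg S * x = x * char_avg S"
  unfolding char_avg_def sum_distrib_left sum_distrib_right
proof (intro sum.cong refl)
  fix g assume "g \<in> S"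
  with assms have "g * x = x * g" by (intro Z_central) (auto simp: Z_subgroup_def)
  then show "iota (inverse (of_nat (card S)) * inverse (om g)) * g * x
      = x * (iota (inverse (of_nat (card S)) * inverse (om g)) * g)"
    by (metis iota_commute mult.assoc)
qed

lemma char_avg_absorb:
  assumes S: "Z_subgroup S" and card: "of_nat (card S) \<noteq> (0::'f)"
    and t: "\<And>g. g \<in> S \<Longrightarrow> g * t = iota (om g) * t"
  shows "char_avg S * t = t"
proof -
  have "char_avg S * t = (\<Sum>g\<in>S. iota (inverse (of_nat (card S)) * inverse (om g) * om g) * t)"
    unfolding char_avg_def sum_distrib_right
    using t by (intro sum.cong refl) (simp add: mult.assoc iota_simps)
  also have "\<dots> = (\<Sum>g\<in>S. iota (inverse (of_nat (card S))) * t)"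
    using S by (intro sum.cong refl) (auto simp: Z_subgroup_def om_cancel)
  also have "\<dots> = iota (of_nat (card S) * inverse (of_nat (card S))) * t"
    by (simp add: iota_simps falgebra_of_nat[OF falgebra] mult.assoc)
  also have "\<dots> = t" using card by (simp add: iota_simps)
  finally show ?thesis .
qed

lemma char_avg_eigen:
  assumes S: "Z_subgroup S" and g: "g \<in> S"
  shows "g * char_avg S = iota (om g) * char_avg S"
proof -
  have gZ: "g \<in> Z" using S g by (auto simp: Z_subgroup_def)
  define c where "c = inverse (of_nat (card S) :: 'f)"
  define phi where "phi x = iota (c * inverse (om x)) * x" for x
  have "g * char_avg S = (\<Sum>x\<in>S. g * phi x)"
    unfolding char_avg_def phi_def c_def sum_distrib_left ..
  also have "\<dots> = (\<Sum>x\<in>S. iota (om g) * phi (g * x))"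
  proof (intro sum.cong refl)
    fix x assume "x \<in> S"
    then have xZ: "x \<in> Z" using S by (auto simp: Z_subgroup_def)
    have "om g * (c * inverse (om (g * x))) = c * inverse (om x)"
      using om_nonzero[OF gZ] om_nonzero[OF xZ] by (simp add: om_mult[OF gZ xZ] field_simps)
    then have "iota (om g) * phi (g * x) = iota (c * inverse (om x)) * (g * x)"
      unfolding phi_def by (metis iota_simps(3) mult.assoc)
    also have "\<dots> = g * phi x"
      unfolding phi_def by (metis Z_central[OF gZ] mult.assoc)
    finally show "g * phi x = iota (om g) * phi (g * x)" by simp
  qed
  also have "\<dots> = iota (om g) * (\<Sum>x\<in>(\<lambda>x. g * x) ` S. phi x)"
    using Z_cancel[OF gZ] by (simp add: sum_distrib_left sum.reindex inj_on_def)
  also have "\<dots> = iota (om g) * char_avg S"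
    unfolding Z_subgroup_translate[OF S g] char_avg_def phi_def c_def ..
  finally show ?thesis .
qed

lemma char_avg_idem:
  "Z_subgroup S \<Longrightarrow> of_nat (card S) \<noteq> (0::'f) \<Longrightarrow> char_avg S * char_avg S = char_avg S"
  using char_avg_absorb char_avg_eigen by blast

lemma char_avg_acts_trivially:
  assumes S: "Z_subgroup S" and card: "of_nat (card S) \<noteq> (0::'f)"
    and act: "lmodule act" "acts_by_character iota Z act om"
  shows "act (char_avg S) w = w"
proof -
  have "act (char_avg S) w = (\<Sum>g\<in>S. act (iota (inverse (of_nat (card S)) * inverse (om g) * om g)) w)"
    unfolding char_avg_def lmodule_sum_left[OF act(1)]
    using act S by (intro sum.cong refl)
      (auto simp: acts_by_character_def lmoduleD[OF act(1)] iota_simps Z_subgroup_def)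
  also have "\<dots> = act (\<Sum>g\<in>S. iota (inverse (of_nat (card S)))) w"
    unfolding lmodule_sum_left[OF act(1)]
    using S by (intro sum.cong refl) (auto simp: Z_subgroup_def om_cancel)
  also have "(\<Sum>g\<in>S. iota (inverse (of_nat (card S)))) = iota (of_nat (card S) * inverse (of_nat (card S)))"
    by (simp add: iota_simps falgebra_of_nat[OF falgebra])
  also have "\<dots> = 1" using card by (simp add: iota_simps)
  finally show ?thesis by (simp add: lmoduleD[OF act(1)])
qed

lemma char_avg_in_subalgebra:
  "subalgebra iota A \<Longrightarrow> S \<subseteq> A \<Longrightarrow> char_avg S \<in> A"
  unfolding char_avg_def
  by (intro subalgebra_sum[OF _ falgebra]) (auto intro: subalgebraD(2,4))

end

section \<open>Crossed products\<close>

locale crossed_product_setting = bar_complex iota actV actW + central_character iota Z om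
  for iota :: "'f::field \<Rightarrow> 'r::ring_1"
    and actV :: "'r \<Rightarrow> 'v::ab_group_add \<Rightarrow> 'v"
    and actW :: "'r \<Rightarrow> 'w::ab_group_add \<Rightarrow> 'w"
    and Z :: "'r set" and om :: "'r \<Rightarrow> 'f" +
  fixes Lam :: "'r set" and sec :: "'r set \<Rightarrow> 'r"
  assumes subalgebra_Lam: "subalgebra iota Lam"
    and card_Z_nonzero: "of_nat (card Z) \<noteq> (0::'f)"
    and crossed_product: "crossed_product Lam Z sec"
    and char_V: "acts_by_character iota Z actV om" and char_W: "acts_by_character iota Z actW om"
begin

abbreviation "H \<equiv> Lam \<inter> Z"
abbreviation "Y \<equiv> quotY Lam Z"

lemmas crossed_product_unfolded = crossed_product[unfolded crossed_product_def Let_def]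

lemma sec_in_coset: "y \<in> Y \<Longrightarrow> sec y \<in> y"
  by (rule bspec[OF conjunct1[OF crossed_product_unfolded]])

lemma sec_one: "sec (zcoset H 1) = 1"
  by (rule conjunct1[OF conjunct2[OF crossed_product_unfolded]])

lemma left_basis:
  "\<exists>!a. (\<forall>y\<in>Y. a y \<in> Lam) \<and> (\<forall>y. y \<notin> Y \<longrightarrow> a y = 0) \<and> x = (\<Sum>y\<in>Y. a y * sec y)"
  by (rule spec[OF conjunct1[OF conjunct2[OF conjunct2[OF conjunct2[OF crossed_product_unfolded]]]]])

lemma left_coeffs_unique:
  assumes "\<forall>y\<in>Y. a y \<in> Lam" "\<forall>y\<in>Y. b y \<in> Lam"
    and "(\<Sum>y\<in>Y. a y * sec y) = (\<Sum>y\<in>Y. b y * sec y)" and "y \<in> Y"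
  shows "a y = b y"
proof -
  let ?a = "\<lambda>y. if y \<in> Y then a y else 0" and ?b = "\<lambda>y. if y \<in> Y then b y else 0"
  let ?x = "\<Sum>y\<in>Y. a y * sec y"
  obtain c where c: "\<And>a'. (\<forall>y\<in>Y. a' y \<in> Lam) \<and> (\<forall>y. y \<notin> Y \<longrightarrow> a' y = 0)
      \<and> ?x = (\<Sum>y\<in>Y. a' y * sec y) \<Longrightarrow> a' = c"
    using left_basis[of ?x] by (elim ex1E) blast
  have "?a = c" using assms(1) by (intro c) simp
  moreover have "?b = c" using assms(2,3) by (intro c) simp
  ultimately have "?a = ?b" by simp
  then have "?a y = ?b y" by (rule fun_cong)
  then show ?thesis using \<open>y \<in> Y\<close> by simp
qed

lemma one_coset_in_Y: "zcoset H 1 \<in> Y"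
  unfolding quotY_def using one_in_Z by blast

lemma mem_zcoset: "x \<in> zcoset H z \<longleftrightarrow> (\<exists>h\<in>H. x = z * h)"
  unfolding zcoset_def by blast

lemma sec_in_Z:
  assumes "y \<in> Y" shows "sec y \<in> Z"
proof -
  obtain z where z: "z \<in> Z" "y = zcoset H z" using assms unfolding quotY_def by blast
  then obtain h where "h \<in> H" "sec y = z * h" using sec_in_coset[OF assms] mem_zcoset by blast
  then show ?thesis using Z_mult z(1) by simp
qed

lemma one_in_Lam: "1 \<in> Lam"
  using subalgebraD(4)[OF subalgebra_Lam, of 1] iota_simps(1) by simp

lemma Z_subgroup_H: "Z_subgroup H"
  using one_in_Lam one_in_Z Z_mult subalgebraD(2)[OF subalgebra_Lam]
  unfolding Z_subgroup_def by blast

lemma zcoset_mult_H: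
  assumes "k \<in> H" shows "zcoset H (z * k) = zcoset H z"
proof -
  have "zcoset H (z * k) = (\<lambda>h. z * h) ` ((\<lambda>h. k * h) ` H)"
    unfolding zcoset_def image_image by (simp add: mult.assoc)
  then show ?thesis
    unfolding Z_subgroup_translate[OF Z_subgroup_H assms] zcoset_def .
qed

lemma sec_coset:
  assumes "z \<in> Z" shows "\<exists>h\<in>H. sec (zcoset H z) = z * h"
proof -
  have "zcoset H z \<in> Y" using assms unfolding quotY_def by blast
  then have "sec (zcoset H z) \<in> zcoset H z" by (rule sec_in_coset)
  then show ?thesis unfolding mem_zcoset by blast
qed

lemma sec_mult_H_inj:
  assumes y: "y \<in> Y" and y': "y' \<in> Y" and h: "h \<in> H" and h': "h' \<in> H"
    and eq: "sec y * h = sec y' * h'"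
  shows "y = y' \<and> h = h'"
proof
  obtain z z' where z: "z \<in> Z" "y = zcoset H z" and z': "z' \<in> Z" "y' = zcoset H z'"
    using y y' unfolding quotY_def by blast
  obtain k k' where k: "k \<in> H" "sec y = z * k" and k': "k' \<in> H" "sec y' = z' * k'"
    using sec_coset z z' by blast
  have "k * h \<in> H" using Z_subgroup_H k h unfolding Z_subgroup_def by blast
  then obtain i where i: "i \<in> H" "k * h * i = 1" by (rule Z_subgroup_inverse[OF Z_subgroup_H])
  have "z = z * (k * h * i)" using i by simp
  also have "\<dots> = sec y * h * i" by (simp add: k(2) mult.assoc)
  also have "\<dots> = z' * (k' * h' * i)" by (simp add: eq k'(2) mult.assoc)
  finally have "z = z' * (k' * h' * i)" .
  moreover have "k' * h' * i \<in> H"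
    using Z_subgroup_H k' h' i unfolding Z_subgroup_def by blast
  ultimately show "y = y'" using z z' zcoset_mult_H by simp
  then show "h = h'" using eq Z_cancel[OF sec_in_Z[OF y]] by simp
qed

lemma bij_Y_times_H: "bij_betw (\<lambda>(y, h). sec y * h) (Y \<times> H) Z"
proof (rule bij_betw_imageI)
  show "inj_on (\<lambda>(y, h). sec y * h) (Y \<times> H)"
  proof (rule inj_onI)
    fix p q assume p: "p \<in> Y \<times> H" and q: "q \<in> Y \<times> H"
      and eq: "(\<lambda>(y, h). sec y * h) p = (\<lambda>(y, h). sec y * h) q"
    obtain y h y' h' where "p = (y, h)" "q = (y', h')" by (cases p, cases q)
    with p q eq sec_mult_H_inj[of y y' h h'] show "p = q" by simp
  qed
  show "(\<lambda>(y, h). sec y * h) ` (Y \<times> H) = Z"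
  proof
    show "(\<lambda>(y, h). sec y * h) ` (Y \<times> H) \<subseteq> Z"
      by (auto intro!: Z_mult sec_in_Z)
    show "Z \<subseteq> (\<lambda>(y, h). sec y * h) ` (Y \<times> H)"
    proof
      fix z assume z: "z \<in> Z"
      then have y: "zcoset H z \<in> Y" unfolding quotY_def by blast
      obtain k where k: "k \<in> H" "sec (zcoset H z) = z * k" using sec_coset[OF z] by blast
      obtain i where i: "i \<in> H" "k * i = 1" using Z_subgroup_inverse[OF Z_subgroup_H k(1)] by blast
      have "sec (zcoset H z) * i = z" using k i by (simp add: mult.assoc)
      then show "z \<in> (\<lambda>(y, h). sec y * h) ` (Y \<times> H)"
        using y i by (intro image_eqI[of _ _ "(zcoset H z, i)"]) auto
    qed
  qed
qed

lemma card_Z_eq: "card Z = card Y * card H"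
  using bij_betw_same_card[OF bij_Y_times_H] by (simp add: card_cartesian_product)

lemma card_H_nonzero: "of_nat (card H) \<noteq> (0::'f)"
  using card_Z_nonzero unfolding card_Z_eq by simp

definition eZ :: 'r where "eZ = char_avg Z"
definition eH :: 'r where "eH = char_avg H"

lemma eZ_idem: "eZ * eZ = eZ"
  unfolding eZ_def by (rule char_avg_idem[OF Z_subgroup_Z card_Z_nonzero])

lemma eZ_central: "eZ * x = x * eZ"
  unfolding eZ_def by (rule char_avg_central[OF Z_subgroup_Z])

lemma eZ_acts_V: "actV eZ v = v" and eZ_acts_W: "actW eZ w = w"
  unfolding eZ_def
  by (rule char_avg_acts_trivially[OF Z_subgroup_Z card_Z_nonzero lmodule_V char_V],
      rule char_avg_acts_trivially[OF Z_subgroup_Z card_Z_nonzero lmodule_W char_W])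

lemma Z_mult_eZ: "z \<in> Z \<Longrightarrow> z * eZ = iota (om z) * eZ"
  unfolding eZ_def by (rule char_avg_eigen[OF Z_subgroup_Z])

lemma eH_idem: "eH * eH = eH"
  unfolding eH_def by (rule char_avg_idem[OF Z_subgroup_H card_H_nonzero])

lemma eH_central: "eH * x = x * eH"
  unfolding eH_def by (rule char_avg_central[OF Z_subgroup_H])

lemma eH_acts_V: "actV eH v = v" and eH_acts_W: "actW eH w = w"
  unfolding eH_def
  by (rule char_avg_acts_trivially[OF Z_subgroup_H card_H_nonzero lmodule_V char_V],
      rule char_avg_acts_trivially[OF Z_subgroup_H card_H_nonzero lmodule_W char_W])

lemma eH_in_Lam: "eH \<in> Lam"
  unfolding eH_def by (rule char_avg_in_subalgebra[OF subalgebra_Lam]) blast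

lemma eH_mult_eZ: "eH * eZ = eZ"
  unfolding eH_def using Z_mult_eZ
  by (intro char_avg_absorb[OF Z_subgroup_H card_H_nonzero]) simp

lemma exists_Lam_mult_eZ: "\<exists>l\<in>Lam. l * eZ = x * eZ"
proof -
  obtain a where a: "\<forall>y\<in>Y. a y \<in> Lam" "x = (\<Sum>y\<in>Y. a y * sec y)"
    using left_basis[of x] by blast
  have "x * eZ = (\<Sum>y\<in>Y. a y * iota (om (sec y))) * eZ"
    unfolding a(2) sum_distrib_right
    by (intro sum.cong refl) (simp add: mult.assoc Z_mult_eZ[OF sec_in_Z])
  moreover have "(\<Sum>y\<in>Y. a y * iota (om (sec y))) \<in> Lam"
    using a(1) subalgebraD(2,4)[OF subalgebra_Lam]
    by (intro subalgebra_sum[OF subalgebra_Lam falgebra]) blast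
  ultimately show ?thesis by auto
qed

lemma eZ_expansion:
  "eZ = (\<Sum>y\<in>Y. iota (of_nat (card H) * inverse (of_nat (card Z)) * inverse (om (sec y))) * (eH * sec y))"
proof -
  let ?c = "\<lambda>z. inverse (of_nat (card Z)) * inverse (om z) :: 'f"
  let ?d = "\<lambda>y. of_nat (card H) * inverse (of_nat (card Z)) * inverse (om (sec y)) :: 'f"
  let ?c' = "\<lambda>h. inverse (of_nat (card H)) * inverse (om h) :: 'f"
  have "eZ = (\<Sum>z\<in>Z. iota (?c z) * z)"
    unfolding eZ_def char_avg_def ..
  also have "\<dots> = (\<Sum>(y, h)\<in>Y \<times> H. iota (?c (sec y * h)) * (sec y * h))"
    using sum.reindex_bij_betw[OF bij_Y_times_H, of "\<lambda>z. iota (?c z) * z"]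
    by (simp add: case_prod_unfold)
  also have "\<dots> = (\<Sum>y\<in>Y. \<Sum>h\<in>H. iota (?c (sec y * h)) * (sec y * h))"
    by (rule sum.cartesian_product[symmetric])
  also have "\<dots> = (\<Sum>y\<in>Y. iota (?d y) * (eH * sec y))"
  proof (rule sum.cong[OF refl])
    fix y assume y: "y \<in> Y"
    have "iota (?c (sec y * h)) * (sec y * h) = iota (?d y) * (iota (?c' h) * h * sec y)"
      if h: "h \<in> H" for h
    proof -
      have coeff: "?c (sec y * h) = ?d y * ?c' h"
        using card_H_nonzero om_nonzero[OF sec_in_Z[OF y]] om_nonzero[of h] h
        by (simp add: om_mult[OF sec_in_Z[OF y]] field_simps)
      have "iota (?c (sec y * h)) * (sec y * h) = iota (?d y * ?c' h) * (h * sec y)"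
        by (subst coeff) (simp only: Z_central[OF sec_in_Z[OF y], of h])
      then show ?thesis by (simp only: iota_simps(3) mult.assoc)
    qed
    then show "(\<Sum>h\<in>H. iota (?c (sec y * h)) * (sec y * h)) = iota (?d y) * (eH * sec y)"
      unfolding eH_def char_avg_def sum_distrib_left sum_distrib_right by simp
  qed
  finally show ?thesis .
qed

lemma mult_eZ_eq_zero_imp_zero:
  assumes m: "m \<in> Lam" and m_eH: "m * eH = m" and m_eZ: "m * eZ = 0"
  shows "m = 0"
proof -
  define c where "c y = of_nat (card H) * inverse (of_nat (card Z)) * inverse (om (sec y))" for y
  have "(\<Sum>y\<in>Y. (iota (c y) * m) * sec y) = m * eZ"
    unfolding eZ_expansion[folded c_def] sum_distrib_left
  proof (rule sum.cong[OF refl])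
    fix y
    have "m * (iota (c y) * (eH * sec y)) = iota (c y) * ((m * eH) * sec y)"
      by (simp only: mult.assoc[symmetric] iota_commute[of "c y" m])
    then show "iota (c y) * m * sec y = m * (iota (c y) * (eH * sec y))"
      by (simp add: m_eH mult.assoc)
  qed
  also have "\<dots> = (\<Sum>y\<in>Y. 0 * sec y)" by (simp add: m_eZ)
  finally have sums: "(\<Sum>y\<in>Y. (iota (c y) * m) * sec y) = (\<Sum>y\<in>Y. 0 * sec y)" .
  have "iota (c (zcoset H 1)) * m = 0"
  proof (rule left_coeffs_unique[OF _ _ sums one_coset_in_Y])
    show "\<forall>y\<in>Y. iota (c y) * m \<in> Lam"
      using m subalgebraD(2,4)[OF subalgebra_Lam] by blast
    show "\<forall>y\<in>Y. (0::'r) \<in> Lam"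
      using subalgebraD(4)[OF subalgebra_Lam, of 0] iota_simps(4) by simp
  qed
  moreover have "c (zcoset H 1) \<noteq> 0"
    using card_H_nonzero card_Z_nonzero om_nonzero[OF one_in_Z] by (simp add: c_def sec_one)
  ultimately have "iota (inverse (c (zcoset H 1)) * c (zcoset H 1)) * m = 0"
    by (simp only: iota_simps(3) mult.assoc mult_zero_right)
  with \<open>c (zcoset H 1) \<noteq> 0\<close> show "m = 0"
    by (simp add: iota_simps(1))
qed

lemma same_action_if_mult_eZ:
  assumes "a * eZ = b * eZ"
  shows "actV a = actV b \<and> actW a = actW b"
proof -
  have "actV a v = actV b v" for v
    by (metis V_simps(3) assms eZ_acts_V)
  moreover have "actW a w = actW b w" for w
    by (metis W_simps(3) assms eZ_acts_W)
  ultimately show ?thesis by blast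
qed

text \<open>Well defined because \<open>\<Lambda>' e = \<Lambda> e\<close> (exists_Lam_mult_eZ) and \<open>l \<mapsto> l e\<close>
  is injective on \<open>\<Lambda> e'\<close> (mult_eZ_eq_zero_imp_zero).\<close>
definition lam_proj :: "'r \<Rightarrow> 'r" where
  "lam_proj x = (THE l. l \<in> Lam \<and> l * eH = l \<and> l * eZ = x * eZ)"

lemma lam_rep_unique:
  assumes "l \<in> Lam" "l * eH = l" "l' \<in> Lam" "l' * eH = l'" "l * eZ = l' * eZ"
  shows "l = l'"
proof -
  have "l - l' \<in> Lam"
    unfolding diff_conv_add_uminus
    by (rule subalgebraD(1)[OF subalgebra_Lam assms(1) subalgebraD(3)[OF subalgebra_Lam assms(3)]])
  moreover have "(l - l') * eH = l - l'" "(l - l') * eZ = 0"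
    using assms(2,4,5) by (simp_all add: left_diff_distrib)
  ultimately have "l - l' = 0" by (rule mult_eZ_eq_zero_imp_zero)
  then show ?thesis by simp
qed

lemma lam_proj: "lam_proj x \<in> Lam" "lam_proj x * eH = lam_proj x" "lam_proj x * eZ = x * eZ"
proof -
  obtain l where l: "l \<in> Lam" "l * eZ = x * eZ" using exists_Lam_mult_eZ by blast
  let ?P = "\<lambda>l. l \<in> Lam \<and> l * eH = l \<and> l * eZ = x * eZ"
  have P: "?P (l * eH)"
  proof (intro conjI)
    show "l * eH \<in> Lam" using subalgebraD(2)[OF subalgebra_Lam l(1) eH_in_Lam] .
    show "l * eH * eH = l * eH" by (simp add: mult.assoc eH_idem)
    show "l * eH * eZ = x * eZ" by (simp add: mult.assoc eH_mult_eZ l(2))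
  qed
  have "\<exists>!l. ?P l"
  proof (rule ex1I[of ?P "l * eH", OF P])
    fix l' assume l': "?P l'"
    show "l' = l * eH"
      by (rule lam_rep_unique) (use l' P in auto)
  qed
  then have "?P (lam_proj x)"
    unfolding lam_proj_def by (rule theI')
  then show "lam_proj x \<in> Lam" "lam_proj x * eH = lam_proj x" "lam_proj x * eZ = x * eZ"
    by simp_all
qed

lemma lam_proj_eqI: "l \<in> Lam \<Longrightarrow> l * eH = l \<Longrightarrow> l * eZ = x * eZ \<Longrightarrow> lam_proj x = l"
  using lam_rep_unique[OF lam_proj(1,2)] lam_proj(3) by simp

lemma lam_proj_Lam:
  assumes "a \<in> Lam" shows "lam_proj a = a * eH"
proof (rule lam_proj_eqI)
  show "a * eH \<in> Lam" using subalgebraD(2)[OF subalgebra_Lam assms eH_in_Lam] .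
  show "a * eH * eH = a * eH" by (simp add: mult.assoc eH_idem)
  show "a * eH * eZ = a * eZ" by (simp add: mult.assoc eH_mult_eZ)
qed

lemma lam_proj_mult_eZ: "lam_proj x * eZ = x * eZ"
  by (rule lam_proj(3))

lemma compatible_hom_lam_proj: "compatible_hom lam_proj UNIV Lam"
proof -
  have add: "lam_proj (x + y) = lam_proj x + lam_proj y" for x y
  proof (rule lam_proj_eqI)
    show "lam_proj x + lam_proj y \<in> Lam"
      using subalgebraD(1)[OF subalgebra_Lam lam_proj(1) lam_proj(1)] .
  qed (simp_all add: distrib_right lam_proj(2,3))
  have mult: "lam_proj (x * y) = lam_proj x * lam_proj y" for x y
  proof (rule lam_proj_eqI)
    show "lam_proj x * lam_proj y \<in> Lam"
      using lam_proj(1) subalgebraD(2)[OF subalgebra_Lam] by blast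
    show "lam_proj x * lam_proj y * eH = lam_proj x * lam_proj y"
      using lam_proj(2) by (simp add: mult.assoc)
    have "lam_proj x * lam_proj y * eZ = lam_proj x * (y * eZ)"
      using lam_proj(3)[of y] by (simp add: mult.assoc)
    also have "\<dots> = (lam_proj x * eZ) * y"
      by (simp only: eZ_central mult.assoc)
    also have "\<dots> = x * y * eZ"
      by (simp only: lam_proj(3) eZ_central mult.assoc)
    finally show "lam_proj x * lam_proj y * eZ = x * y * eZ" .
  qed
  have scalar: "lam_proj (iota c * x) = iota c * lam_proj x" for c x
  proof (rule lam_proj_eqI)
    show "iota c * lam_proj x \<in> Lam"
      using subalgebraD(2)[OF subalgebra_Lam subalgebraD(4)[OF subalgebra_Lam] lam_proj(1)] .
  qed (simp_all add: mult.assoc lam_proj(2,3))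
  have "actV (lam_proj x) = actV x" "actW (lam_proj x) = actW x" for x
    using same_action_if_mult_eZ[OF lam_proj(3)] by simp_all
  then show ?thesis
    unfolding compatible_hom_def using lam_proj(1) add mult scalar by blast
qed

lemma central_idempotent_eH: "central_idempotent iota actV actW Lam eH"
  unfolding central_idempotent_def central_idempotent_axioms_def
  using bar_complex_axioms subalgebra_Lam eH_in_Lam eH_idem eH_central eH_acts_V eH_acts_W
  by blast

lemma central_idempotent_eZ: "central_idempotent iota actV actW UNIV eZ"
  unfolding central_idempotent_def central_idempotent_axioms_def
  using bar_complex_axioms subalgebra_UNIV eZ_idem eZ_central eZ_acts_V eZ_acts_W
  by blast

lemma res_cocycle:
  assumes "cocycles UNIV n f" shows "cocycles Lam n (res_cochain Lam f)"
proof -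
  have "cocycles Lam n (pull id Lam n f)"
    by (rule pull_cocycle[OF subalgebra_Lam compatible_hom_id assms]) simp
  then show ?thesis by (simp add: res_cochain_eq_pull_id[OF cocycleD(1)[OF assms]])
qed

lemma res_cohomologous:
  assumes "(f, g) \<in> cohomologous UNIV n"
  shows "(res_cochain Lam f, res_cochain Lam g) \<in> cohomologous Lam n"
proof -
  have "(pull id Lam n f, pull id Lam n g) \<in> cohomologous Lam n"
    by (rule pull_cohomologous[OF subalgebra_Lam compatible_hom_id assms]) simp
  moreover have "cocycles UNIV n f" "cocycles UNIV n g"
    using cohomologous_cocycles[OF assms] by simp_all
  ultimately show ?thesis
    using res_cochain_eq_pull_id[OF cocycleD(1)] by metis
qed

lemma pull_lam_proj_cocycle: "cocycles Lam n g \<Longrightarrow> cocycles UNIV n (pull lam_proj UNIV n g)"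
  by (rule pull_cocycle[OF subalgebra_UNIV compatible_hom_lam_proj])

lemma pull_lam_proj_cohomologous:
  "(g, g') \<in> cohomologous Lam n \<Longrightarrow> (pull lam_proj UNIV n g, pull lam_proj UNIV n g') \<in> cohomologous UNIV n"
  by (rule pull_cohomologous[OF subalgebra_UNIV compatible_hom_lam_proj])

lemma res_pull_lam_proj:
  assumes g: "cocycles Lam n g"
  shows "(res_cochain Lam (pull lam_proj UNIV n g), g) \<in> cohomologous Lam n"
proof -
  interpret Lam_part: central_idempotent iota actV actW Lam eH by (rule central_idempotent_eH)
  have "res_cochain Lam (pull lam_proj UNIV n g) = pull id Lam n (pull lam_proj UNIV n g)"
    by (rule res_cochain_eq_pull_id[OF cocycleD(1)[OF pull_lam_proj_cocycle[OF g]]])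
  also have "\<dots> = pull (lam_proj \<circ> id) Lam n g"
    by (rule pull_pull) simp
  also have "\<dots> = pull (\<lambda>x. x * eH) Lam n g"
    by (rule pull_cong) (simp add: lam_proj_Lam)
  finally show ?thesis
    using cohomologous_sym[OF Lam_part.cohomologous_pull_mult_u[OF g]] by simp
qed

lemma pull_lam_proj_res:
  assumes f: "cocycles UNIV n f"
  shows "(pull lam_proj UNIV n (res_cochain Lam f), f) \<in> cohomologous UNIV n"
proof -
  interpret whole: central_idempotent iota actV actW UNIV eZ by (rule central_idempotent_eZ)
  let ?fe = "pull (\<lambda>x. x * eZ) UNIV n f"
  have f_fe: "(f, ?fe) \<in> cohomologous UNIV n"
    by (rule whole.cohomologous_pull_mult_u[OF f])
  have "pull lam_proj UNIV n (res_cochain Lam f) = pull lam_proj UNIV n (pull id Lam n f)"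
    by (simp only: res_cochain_eq_pull_id[OF cocycleD(1)[OF f]])
  also have "\<dots> = pull lam_proj UNIV n f"
    using pull_pull[of UNIV lam_proj Lam n id f] lam_proj(1) by simp
  finally have res: "pull lam_proj UNIV n (res_cochain Lam f) = pull lam_proj UNIV n f" .
  have "pull lam_proj UNIV n ?fe = pull ((\<lambda>x. x * eZ) \<circ> lam_proj) UNIV n f"
    by (rule pull_pull) simp
  also have "\<dots> = ?fe"
    by (rule pull_cong) (simp add: lam_proj_mult_eZ)
  finally have "(pull lam_proj UNIV n f, ?fe) \<in> cohomologous UNIV n"
    using pull_cohomologous[OF subalgebra_UNIV compatible_hom_mono[OF compatible_hom_lam_proj] f_fe]
    by simp
  then show ?thesis
    unfolding res using cohomologous_sym[OF f_fe] by (rule cohomologous_trans)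
qed

theorem restriction_iso:
  "(\<forall>E\<in>Ext iota UNIV actV actW n. \<forall>f\<in>E.
      ext_res iota Lam actV actW n E = ext_rel iota Lam actV actW n `` {res_cochain Lam f})
   \<and> bij_betw (ext_res iota Lam actV actW n) (Ext iota UNIV actV actW n) (Ext iota Lam actV actW n)"
proof -
  have ext_res: "ext_res iota Lam actV actW n
      = (\<lambda>E. cohomologous Lam n `` {res_cochain Lam (SOME f. f \<in> E)})"
    by (simp add: ext_res_def fun_eq_iff)
  show ?thesis
    unfolding ext_res Ext_def
  proof
    show "\<forall>E\<in>{f. cocycles UNIV n f} // cohomologous UNIV n. \<forall>f\<in>E.
        cohomologous Lam n `` {res_cochain Lam (SOME f. f \<in> E)}
          = cohomologous Lam n `` {res_cochain Lam f}"
      by (intro ballI quotient_class_rep[OF equiv_cohomologous equiv_cohomologous] res_cohomologous)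
    show "bij_betw (\<lambda>E. cohomologous Lam n `` {res_cochain Lam (SOME f. f \<in> E)})
        ({f. cocycles UNIV n f} // cohomologous UNIV n) ({g. cocycles Lam n g} // cohomologous Lam n)"
      by (rule bij_betw_quotient_map[OF equiv_cohomologous equiv_cohomologous,
            where e = "pull lam_proj UNIV n"])
        (simp_all add: res_cocycle res_cohomologous pull_lam_proj_cohomologous pull_lam_proj_res
          res_pull_lam_proj pull_lam_proj_cocycle)
  qed
qed

end

theorem lemma5p4:
  fixes iota :: "'f::field \<Rightarrow> 'r::ring_1"
    and Lam Z :: "'r set"
    and sec :: "'r set \<Rightarrow> 'r"
    and p :: nat
    and actV :: "'r \<Rightarrow> 'v::ab_group_add \<Rightarrow> 'v"
    and actW :: "'r \<Rightarrow> 'w::ab_group_add \<Rightarrow> 'w"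
    and omV omW :: "'r \<Rightarrow> 'f"
  assumes "prime p" and "CHAR('f) = p"
    and "falgebra iota" and "artinian TYPE('r)"
    and "subalgebra iota Lam"
    and "central_unit_group Z" and "coprime (card Z) p"
    and "crossed_product Lam Z sec"
    and "lmodule actV" and "lmodule actW"
    and "acts_by_character iota Z actV omV" and "acts_by_character iota Z actW omW"
    and "\<forall>z\<in>Z. omV z = omW z"
  shows "(\<forall>E\<in>Ext iota UNIV actV actW i. \<forall>f\<in>E.
            ext_res iota Lam actV actW i E = ext_rel iota Lam actV actW i `` {res_cochain Lam f})
       \<and> bij_betw (ext_res iota Lam actV actW i) (Ext iota UNIV actV actW i) (Ext iota Lam actV actW i)"
proof -
  have "of_nat (card Z) \<noteq> (0::'f)"
    using assms(1,2,7) by (rule of_nat_card_nonzero)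
  moreover have "acts_by_character iota Z actW omV"
  proof -
    have "\<forall>x\<in>Z. \<forall>y\<in>Z. x * y \<in> Z" using assms(6) by (simp add: central_unit_group_def)
    then show ?thesis using acts_by_character_cong[of Z omV omW iota actW] assms(12,13) by simp
  qed
  ultimately interpret crossed_product_setting iota actV actW Z omV Lam sec
    using assms unfolding acts_by_character_def
    by (intro crossed_product_setting.intro bar_complex.intro central_character.intro
        crossed_product_setting_axioms.intro) (simp_all add: acts_by_character_def)
  show ?thesis by (rule restriction_iso)
qed

end
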